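(* Suppose $k=k_n\to\infty$ and $k/n\to0$. Let $E_{n-k+1,n}$ be the $(n-k+1)$-th order statistic of $n$ independent standard exponential random variables, and $F_1,\dots,F_{k-1}$ independent standard exponential random variables independent of $E_{n-k+1,n}$. For $\rho\le0$ let $U_n^{(\rho)}=\frac1k\sum_{i=1}^{k-1}K_\rho\left(1+\frac{F_i}{E_{n-k+1,n}}\right)$. Then for all $\rho\le0$, $$\frac{k^{1/2}}{\sigma_\rho(E_{n-k+1,n})}\left(U_n^{(\rho)}-\mu_\rho(E_{n-k+1,n})\right)\xrightarrow{d}\mathcal N(0,1).$$
   Context: $K_\rho(\lambda)=\int_1^\lambda u^{\rho-1}du$. For $t>0$, $\rho\le0$: $\mu_\rho(t)=\int_0^\infty K_\rho(1+x/t)e^{-x}dx$ and $\sigma_\rho^2(t)=\int_0^\infty K_\rho^2(1+x/t)e^{-x}dx-\mu_\rho^2(t)$, $\sigma_\rho(t)\ge0$. *)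

theory Defs
  imports "HOL-Probability.Probability"
begin

definition Kfun :: "real \<Rightarrow> real \<Rightarrow> real" where
  "Kfun \<rho> lam = (LBINT u=1..lam. u powr (\<rho> - 1))"

definition mu_fun :: "real \<Rightarrow> real \<Rightarrow> real" where
  "mu_fun \<rho> t = (LBINT x:{0..}. Kfun \<rho> (1 + x / t) * exp (- x))"

definition sigma_fun :: "real \<Rightarrow> real \<Rightarrow> real" where
  "sigma_fun \<rho> t = sqrt ((LBINT x:{0..}. (Kfun \<rho> (1 + x / t))\<^sup>2 * exp (- x)) - (mu_fun \<rho> t)\<^sup>2)"

definition order_stat :: "nat \<Rightarrow> (nat \<Rightarrow> real) \<Rightarrow> nat \<Rightarrow> real" where
  "order_stat n x j = sort (map x [0..<n]) ! (j - 1)"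

end

theory Submission
  imports Defs
begin

(* Write E for the order statistic, m = k - 1, and g_t(x) = t K_rho(1 + x/t) - x for the remainder
   of the kernel, so that K_rho(1 + x/t) = (x + g_t(x)) / t with -(1-rho) x^2/(2t) <= g_t(x) <= 0.
   Integrating against the Exp(1) law gives t mu_rho(t) = 1 + E g_t and t^2 sigma_rho(t)^2 = 1 + O(1/t).
   Substituting, the normalised statistic Z_n differs from the standardised sum
   A_n = (F_1 + ... + F_m - m) / sqrt m by at most
     |A_n| (2/k + 30 (1-rho)^2 / E) + 2 |W_n(E)| / sqrt k + 2 / sqrt k,
   where W_n(t) = sum_i (g_t(F_i) - E g_t)  (lemma statistic_vs_standardised_sum).
   Now A_n is Erlang distributed and tends to N(0,1) by the central limit theorem; E tends to
   infinity in probability (Hoeffding's inequality); A_n is tight (Chebyshev); and, conditionally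
   on the independent variable E = t, W_n(t) has second moment at most m 6 (1-rho)^2 / t^2.
   Hence Z_n - A_n tends to 0 in probability, and a Slutsky argument concludes. *)

section \<open>The kernel K\<close>

text \<open>Unfolding the interval integral, which also gives measurability of the kernel.\<close>
lemma Kfun_eq_indicator:
  "Kfun r lam = (if 1 \<le> lam then (LBINT u. indicator {u. 1 < u \<and> u < lam} u * u powr (r - 1))
     else - (LBINT u. indicator {u. lam < u \<and> u < 1} u * u powr (r - 1)))"
  unfolding Kfun_def interval_lebesgue_integral_def set_lebesgue_integral_def einterval_def
  by simp

lemma Kfun_measurable[measurable]: "Kfun r \<in> borel_measurable borel"
  unfolding Kfun_eq_indicator[abs_def] by measurable

lemma mu_fun_measurable[measurable]: "mu_fun r \<in> borel_measurable borel"
  unfolding mu_fun_def[abs_def] set_lebesgue_integral_def by measurable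

lemma sigma_fun_measurable[measurable]: "sigma_fun r \<in> borel_measurable borel"
  unfolding sigma_fun_def[abs_def] set_lebesgue_integral_def by measurable

lemma powr_nonpos_exponent_bounds:
  fixes u r :: real
  assumes "1 \<le> u" "r \<le> 0"
  shows "u powr (r - 1) \<le> 1" "1 - (1 - r) * (u - 1) \<le> u powr (r - 1)"
proof -
  have u: "0 < u" using assms by simp
  have ln: "0 \<le> ln u" "ln u \<le> u - 1" using assms by (simp_all add: ln_le_minus_one)
  have "(r - 1) * ln u \<le> 0" using ln assms by (simp add: mult_nonpos_nonneg)
  then show "u powr (r - 1) \<le> 1" using u by (simp add: powr_def)
  have "1 + (r - 1) * ln u \<le> exp ((r - 1) * ln u)" by (rule exp_ge_add_one_self)
  moreover have "(r - 1) * (u - 1) \<le> (r - 1) * ln u"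
    using ln assms by (intro mult_left_mono_neg) auto
  ultimately show "1 - (1 - r) * (u - 1) \<le> u powr (r - 1)" using u
    by (simp add: powr_def algebra_simps)
qed

lemma Kfun_bounds:
  fixes y r :: real
  assumes y: "0 \<le> y" and r: "r \<le> 0"
  shows "y - (1 - r) * y\<^sup>2 / 2 \<le> Kfun r (1 + y)" "Kfun r (1 + y) \<le> y"
proof -
  have K: "Kfun r (1 + y) = (LBINT u:{1..1+y}. u powr (r - 1))"
    unfolding Kfun_def using interval_integral_Icc[of 1 "1+y" "\<lambda>u. u powr (r - 1)"] y
    by (simp add: one_ereal_def)
  have int_powr: "set_integrable lborel {1..1+y} (\<lambda>u::real. u powr (r - 1))"
    by (rule borel_integrable_atLeastAtMost') (auto intro!: continuous_intros)
  have int_one: "set_integrable lborel {1..1+y} (\<lambda>u::real. 1::real)"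
    by (rule borel_integrable_atLeastAtMost') (auto intro!: continuous_intros)
  have int_lin: "set_integrable lborel {1..1+y} (\<lambda>u::real. 1 - (1 - r) * (u - 1))"
    by (rule borel_integrable_atLeastAtMost') (auto intro!: continuous_intros)
  have one: "(LBINT u:{1..1+y}. (1::real)) = y"
    using y by (simp add: set_integral_const)
  have lin: "(LBINT u:{1..1+y}. 1 - (1 - r) * (u - 1)) = y - (1 - r) * y\<^sup>2 / 2"
  proof -
    have "(LBINT u=ereal 1..ereal (1+y). 1 - (1 - r) * (u - 1))
        = (\<lambda>u. u - (1 - r) * (u - 1)^2/2) (1+y) - (\<lambda>u. u - (1 - r) * (u - 1)^2/2) 1"
      by (rule interval_integral_FTC_finite)
         (auto intro!: continuous_intros derivative_eq_intros
           simp: has_real_derivative_iff_has_vector_derivative[symmetric] algebra_simps,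
           simp add: field_simps)
    then show ?thesis
      using interval_integral_Icc[of 1 "1+y" "\<lambda>u. 1 - (1 - r) * (u - 1)"] y
      by (simp add: algebra_simps one_ereal_def)
  qed
  have "(LBINT u:{1..1+y}. u powr (r - 1)) \<le> (LBINT u:{1..1+y}. (1::real))"
    by (rule set_integral_mono[OF int_powr int_one]) (use powr_nonpos_exponent_bounds r in auto)
  then show "Kfun r (1 + y) \<le> y" using K one by simp
  have "(LBINT u:{1..1+y}. 1 - (1 - r) * (u - 1)) \<le> (LBINT u:{1..1+y}. u powr (r - 1))"
    by (rule set_integral_mono[OF int_lin int_powr]) (use powr_nonpos_exponent_bounds r in auto)
  then show "y - (1 - r) * y\<^sup>2 / 2 \<le> Kfun r (1 + y)" using K lin by simp
qed

section \<open>The standard exponential law\<close>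

definition Exp1 :: "real measure" where
  "Exp1 = density lborel (exponential_density 1)"

lemma prob_space_Exp1: "prob_space Exp1"
  unfolding Exp1_def by (rule prob_space_exponential_density) simp

lemma sets_Exp1[simp, measurable_cong]: "sets Exp1 = sets borel"
  and space_Exp1[simp]: "space Exp1 = UNIV"
  by (simp_all add: Exp1_def)

lemma set_integral_exp_eq_Exp1:
  assumes [measurable]: "f \<in> borel_measurable borel"
  shows "(LBINT x:{0..}. f x * exp (- x)) = integral\<^sup>L Exp1 f"
  unfolding Exp1_def set_lebesgue_integral_def
  by (subst integral_density)
     (auto intro!: Bochner_Integration.integral_cong simp: exponential_density_def indicator_def)

lemma distributed_Exp1: "distributed Exp1 lborel (\<lambda>x. x) (exponential_density 1)"
  unfolding distributed_def Exp1_def by (auto simp: distr_id2[unfolded id_def])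

lemma Exp1_moment_integrable: "integrable Exp1 (\<lambda>x. x ^ i)"
  using prob_space.erlang_ith_moment_integrable[OF prob_space_Exp1 _ distributed_Exp1] by simp

lemma Exp1_moment: "integral\<^sup>L Exp1 (\<lambda>x. x ^ i) = fact i"
  using prob_space.erlang_ith_moment[OF prob_space_Exp1 _ distributed_Exp1, of i] by simp

lemma Exp1_moments_1_2:
  "integrable Exp1 (\<lambda>x. x)" "integrable Exp1 (\<lambda>x. x\<^sup>2)"
  "integral\<^sup>L Exp1 (\<lambda>x. x) = 1" "integral\<^sup>L Exp1 (\<lambda>x. x\<^sup>2) = 2"
  using Exp1_moment_integrable[of 1] Exp1_moment_integrable[of 2] Exp1_moment[of 1] Exp1_moment[of 2]
  by (simp_all add: numeral_2_eq_2)

lemma AE_Exp1_nonneg: "AE x in Exp1. 0 \<le> x"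
  unfolding Exp1_def by (subst AE_density) (auto simp: exponential_density_def)

lemma exponential_integral_transfer:
  fixes h :: "real \<Rightarrow> real"
  assumes D: "distributed M lborel X (exponential_density 1)"
    and h[measurable]: "h \<in> borel_measurable borel"
  shows "integral\<^sup>L M (\<lambda>\<omega>. h (X \<omega>)) = integral\<^sup>L Exp1 h"
    "integrable M (\<lambda>\<omega>. h (X \<omega>)) \<longleftrightarrow> integrable Exp1 h"
proof -
  have X[measurable]: "X \<in> measurable M lborel" using distributed_measurable[OF D] .
  have law: "distr M lborel X = Exp1"
    using distributed_distr_eq_density[OF D] by (simp add: Exp1_def)
  show "integral\<^sup>L M (\<lambda>\<omega>. h (X \<omega>)) = integral\<^sup>L Exp1 h"
    using integral_distr[OF X, of h] by (simp add: law)
  show "integrable M (\<lambda>\<omega>. h (X \<omega>)) \<longleftrightarrow> integrable Exp1 h"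
    using integrable_distr_eq[OF X, of h] by (simp add: law)
qed

section \<open>The remainder of the kernel and the functions \<open>\<mu>\<close> and \<open>\<sigma>\<close>\<close>

definition Krem :: "real \<Rightarrow> real \<Rightarrow> real \<Rightarrow> real" where
  "Krem r t x = t * Kfun r (1 + x / t) - x"

lemma Krem_measurable_pair[measurable]:
  "(\<lambda>(t, x). Krem r t x) \<in> borel_measurable (borel \<Otimes>\<^sub>M borel)"
  unfolding Krem_def by measurable

lemma Krem_measurable[measurable]: "Krem r t \<in> borel_measurable borel"
  unfolding Krem_def by measurable

lemma Krem_bounds:
  assumes t: "0 < t" and x: "0 \<le> x" and r: "r \<le> 0"
  shows "Krem r t x \<le> 0" "- ((1 - r) * x\<^sup>2 / (2 * t)) \<le> Krem r t x"
proof -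
  have y: "0 \<le> x / t" using t x by simp
  note K = Kfun_bounds[OF y r]
  have "t * Kfun r (1 + x / t) \<le> t * (x / t)" using K(2) t by (intro mult_left_mono) auto
  then show "Krem r t x \<le> 0" using t by (simp add: Krem_def)
  have "t * (x / t - (1 - r) * (x / t)\<^sup>2 / 2) \<le> t * Kfun r (1 + x / t)"
    using K(1) t by (intro mult_left_mono) auto
  moreover have "t * (x / t - (1 - r) * (x / t)\<^sup>2 / 2) = x - (1 - r) * x\<^sup>2 / (2 * t)"
    using t by (simp add: field_simps power2_eq_square)
  ultimately show "- ((1 - r) * x\<^sup>2 / (2 * t)) \<le> Krem r t x" by (simp add: Krem_def)
qed

lemma Krem_abs_bound:
  assumes "0 < t" "0 \<le> x" "r \<le> 0"
  shows "\<bar>Krem r t x\<bar> \<le> (1 - r) / (2 * t) * x\<^sup>2"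
  using Krem_bounds[OF assms] by (simp add: abs_if)

lemma Krem_sq_bound:
  assumes "0 < t" "0 \<le> x" "r \<le> 0"
  shows "(Krem r t x)\<^sup>2 \<le> ((1 - r) / (2 * t))\<^sup>2 * x ^ 4"
proof -
  have "\<bar>Krem r t x\<bar>\<^sup>2 \<le> ((1 - r) / (2 * t) * x\<^sup>2)\<^sup>2"
    by (rule power_mono) (use Krem_abs_bound[OF assms] in auto)
  also have "((1 - r) / (2 * t) * x\<^sup>2)\<^sup>2 = ((1 - r) / (2 * t))\<^sup>2 * x ^ 4"
    using power_mult[of x 2 2, symmetric] by (simp only: power_mult_distrib) simp
  finally show ?thesis by simp
qed

text \<open>\<open>(t \<sigma>(t))\<^sup>2\<close>, the variance of \<open>t K(1 + F/t)\<close> for \<open>F\<close> standard exponential.\<close>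
definition scaled_var :: "real \<Rightarrow> real \<Rightarrow> real" where
  "scaled_var r t = t\<^sup>2 * ((LBINT x:{0..}. (Kfun r (1 + x / t))\<^sup>2 * exp (- x)) - (mu_fun r t)\<^sup>2)"

lemma t_sigma_eq: "0 < t \<Longrightarrow> t * sigma_fun r t = sqrt (scaled_var r t)"
  unfolding sigma_fun_def scaled_var_def by (simp add: real_sqrt_mult)

context
  fixes r t :: real
  assumes r: "r \<le> 0" and t: "0 < t"
begin

text \<open>The quadratic bound on the remainder makes all needed moments finite, via those of Exp1.\<close>
lemma Krem_integrable: "integrable Exp1 (Krem r t)"
proof (rule Bochner_Integration.integrable_bound)
  show "integrable Exp1 (\<lambda>x. (1 - r) / (2 * t) * x ^ 2)" using Exp1_moment_integrable by simp
  show "AE x in Exp1. norm (Krem r t x) \<le> norm ((1 - r) / (2 * t) * x ^ 2)"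
    using AE_Exp1_nonneg
    by eventually_elim (use Krem_abs_bound[OF t _ r] r t in \<open>auto simp: abs_mult abs_of_nonneg\<close>)
qed simp

lemma Krem_sq_integrable: "integrable Exp1 (\<lambda>x. (Krem r t x)\<^sup>2)"
proof (rule Bochner_Integration.integrable_bound)
  show "integrable Exp1 (\<lambda>x. ((1 - r) / (2 * t))\<^sup>2 * x ^ 4)" using Exp1_moment_integrable by simp
  show "AE x in Exp1. norm ((Krem r t x)\<^sup>2) \<le> norm (((1 - r) / (2 * t))\<^sup>2 * x ^ 4)"
    using AE_Exp1_nonneg by eventually_elim (use Krem_sq_bound[OF t _ r] in simp)
qed simp

lemma x_Krem_integrable: "integrable Exp1 (\<lambda>x. x * Krem r t x)"
proof (rule Bochner_Integration.integrable_bound)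
  show "integrable Exp1 (\<lambda>x. (1 - r) / (2 * t) * x ^ 3)" using Exp1_moment_integrable by simp
  show "AE x in Exp1. norm (x * Krem r t x) \<le> norm ((1 - r) / (2 * t) * x ^ 3)"
    using AE_Exp1_nonneg
  proof eventually_elim
    case (elim x)
    have "x * \<bar>Krem r t x\<bar> \<le> x * ((1 - r) / (2 * t) * x\<^sup>2)"
      by (rule mult_left_mono[OF Krem_abs_bound[OF t elim r] elim])
    then show ?case
      using r t elim by (simp add: abs_mult power2_eq_square power3_eq_cube mult_ac abs_of_nonneg)
  qed
qed simp

text \<open>Moment bounds for the remainder, from \<open>E F\<^sup>2 = 2\<close>, \<open>E F\<^sup>3 = 6\<close> and \<open>E F\<^sup>4 = 24\<close>.\<close>
lemma mean_Krem_bounds: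
  "- ((1 - r) / t) \<le> integral\<^sup>L Exp1 (Krem r t)" "integral\<^sup>L Exp1 (Krem r t) \<le> 0"
proof -
  have "integral\<^sup>L Exp1 (\<lambda>x. - ((1 - r) / (2 * t) * x ^ 2)) \<le> integral\<^sup>L Exp1 (Krem r t)"
    by (rule integral_mono_AE)
       (use Exp1_moment_integrable Krem_integrable AE_Exp1_nonneg Krem_bounds(2)[OF t _ r] in auto)
  moreover have "integral\<^sup>L Exp1 (\<lambda>x. - ((1 - r) / (2 * t) * x ^ 2)) = - ((1 - r) / t)"
    using Exp1_moments_1_2(4) t by simp (simp add: field_simps)
  ultimately show "- ((1 - r) / t) \<le> integral\<^sup>L Exp1 (Krem r t)" by simp
  have "integral\<^sup>L Exp1 (Krem r t) \<le> integral\<^sup>L Exp1 (\<lambda>x. 0)"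
    by (rule integral_mono_AE) (use Krem_integrable AE_Exp1_nonneg Krem_bounds(1)[OF t _ r] in auto)
  then show "integral\<^sup>L Exp1 (Krem r t) \<le> 0" by simp
qed

lemma mean_x_Krem_bounds:
  "- (3 * (1 - r) / t) \<le> integral\<^sup>L Exp1 (\<lambda>x. x * Krem r t x)"
  "integral\<^sup>L Exp1 (\<lambda>x. x * Krem r t x) \<le> 0"
proof -
  have "integral\<^sup>L Exp1 (\<lambda>x. - ((1 - r) / (2 * t) * x ^ 3)) \<le> integral\<^sup>L Exp1 (\<lambda>x. x * Krem r t x)"
  proof (rule integral_mono_AE)
    show "AE x in Exp1. - ((1 - r) / (2 * t) * x ^ 3) \<le> x * Krem r t x"
      using AE_Exp1_nonneg
    proof eventually_elim
      case (elim x)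
      have "x * (- ((1 - r) * x\<^sup>2 / (2 * t))) \<le> x * Krem r t x"
        using Krem_bounds(2)[OF t elim r] elim by (rule mult_left_mono)
      then show ?case by (simp add: power2_eq_square power3_eq_cube field_simps)
    qed
  qed (use Exp1_moment_integrable x_Krem_integrable in auto)
  moreover have "integral\<^sup>L Exp1 (\<lambda>x. - ((1 - r) / (2 * t) * x ^ 3)) = - (3 * (1 - r) / t)"
    using Exp1_moment[of 3] t by (simp add: fact_numeral) (simp add: field_simps)
  ultimately show "- (3 * (1 - r) / t) \<le> integral\<^sup>L Exp1 (\<lambda>x. x * Krem r t x)" by simp
  have "integral\<^sup>L Exp1 (\<lambda>x. x * Krem r t x) \<le> integral\<^sup>L Exp1 (\<lambda>x. 0)"
    by (rule integral_mono_AE)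
       (use x_Krem_integrable AE_Exp1_nonneg Krem_bounds(1)[OF t _ r] in \<open>auto simp: mult_nonneg_nonpos\<close>)
  then show "integral\<^sup>L Exp1 (\<lambda>x. x * Krem r t x) \<le> 0" by simp
qed

lemma mean_Krem_sq_bound: "integral\<^sup>L Exp1 (\<lambda>x. (Krem r t x)\<^sup>2) \<le> 6 * (1 - r)\<^sup>2 / t\<^sup>2"
proof -
  have "integral\<^sup>L Exp1 (\<lambda>x. (Krem r t x)\<^sup>2) \<le> integral\<^sup>L Exp1 (\<lambda>x. ((1 - r) / (2 * t))\<^sup>2 * x ^ 4)"
    by (rule integral_mono_AE)
       (use Exp1_moment_integrable Krem_sq_integrable AE_Exp1_nonneg Krem_sq_bound[OF t _ r] in auto)
  also have "\<dots> = 6 * (1 - r)\<^sup>2 / t\<^sup>2"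
    using Exp1_moment[of 4] by (simp add: fact_numeral power_divide power_mult_distrib)
  finally show ?thesis .
qed

lemma Kfun_via_Krem: "Kfun r (1 + x / t) = (x + Krem r t x) / t"
  using t by (simp add: Krem_def)

lemma mu_via_Krem: "t * mu_fun r t = 1 + integral\<^sup>L Exp1 (Krem r t)"
proof -
  have "mu_fun r t = integral\<^sup>L Exp1 (\<lambda>x. Kfun r (1 + x / t))"
    unfolding mu_fun_def by (rule set_integral_exp_eq_Exp1) measurable
  also have "\<dots> = integral\<^sup>L Exp1 (\<lambda>x. (x + Krem r t x) / t)" by (simp add: Kfun_via_Krem)
  also have "\<dots> = (1 + integral\<^sup>L Exp1 (Krem r t)) / t"
    using Exp1_moments_1_2 Krem_integrable by simp
  finally show ?thesis using t by simp
qed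

lemma scaled_var_via_Krem:
  "scaled_var r t = 1 + 2 * integral\<^sup>L Exp1 (\<lambda>x. x * Krem r t x) + integral\<^sup>L Exp1 (\<lambda>x. (Krem r t x)\<^sup>2)
     - 2 * integral\<^sup>L Exp1 (Krem r t) - (integral\<^sup>L Exp1 (Krem r t))\<^sup>2"
proof -
  have "(LBINT x:{0..}. (Kfun r (1 + x / t))\<^sup>2 * exp (- x)) = integral\<^sup>L Exp1 (\<lambda>x. (Kfun r (1 + x / t))\<^sup>2)"
    by (rule set_integral_exp_eq_Exp1) measurable
  also have "\<dots> = integral\<^sup>L Exp1 (\<lambda>x. (x\<^sup>2 + 2 * (x * Krem r t x) + (Krem r t x)\<^sup>2) / t\<^sup>2)"
    by (intro Bochner_Integration.integral_cong)
       (simp_all add: Kfun_via_Krem power_divide power2_sum algebra_simps)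
  also have "\<dots> = (2 + 2 * integral\<^sup>L Exp1 (\<lambda>x. x * Krem r t x) + integral\<^sup>L Exp1 (\<lambda>x. (Krem r t x)\<^sup>2)) / t\<^sup>2"
    using Exp1_moments_1_2 x_Krem_integrable Krem_sq_integrable by simp
  finally have second: "(LBINT x:{0..}. (Kfun r (1 + x / t))\<^sup>2 * exp (- x)) = \<dots>" .
  have mean: "mu_fun r t = (1 + integral\<^sup>L Exp1 (Krem r t)) / t"
    using mu_via_Krem t by (simp add: field_simps)
  show ?thesis unfolding scaled_var_def second mean using t by (simp add: field_simps power2_eq_square)
qed

lemma scaled_var_close_to_one:
  assumes "1 \<le> t"
  shows "\<bar>scaled_var r t - 1\<bar> \<le> 15 * (1 - r)\<^sup>2 / t"
proof -
  define u where "u = (1 - r) / t"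
  define A where "A = integral\<^sup>L Exp1 (Krem r t)"
  define B where "B = integral\<^sup>L Exp1 (\<lambda>x. x * Krem r t x)"
  define D where "D = integral\<^sup>L Exp1 (\<lambda>x. (Krem r t x)\<^sup>2)"
  have A: "-u \<le> A" "A \<le> 0" using mean_Krem_bounds unfolding A_def u_def by auto
  have B: "-(3*u) \<le> B" "B \<le> 0" using mean_x_Krem_bounds unfolding B_def u_def by auto
  have D: "D \<le> 6 * u\<^sup>2" "0 \<le> D" using mean_Krem_sq_bound unfolding D_def u_def
    by (auto simp: power_divide intro!: integral_nonneg_AE)
  have A2: "A\<^sup>2 \<le> u\<^sup>2" using A by (auto intro!: power2_le_iff_abs_le[THEN iffD2])
  have "\<bar>scaled_var r t - 1\<bar> \<le> 8 * u + 7 * u\<^sup>2"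
    unfolding scaled_var_via_Krem A_def[symmetric] B_def[symmetric] D_def[symmetric] abs_le_iff
    using A B D A2 zero_le_power2[of A] by linarith
  also have "\<dots> \<le> 15 * (1 - r)\<^sup>2 / t"
  proof -
    have c: "1 \<le> 1 - r" using r by simp
    have "u \<le> (1 - r)\<^sup>2 / t" unfolding u_def using c t
      by (intro divide_right_mono) (auto simp: power2_eq_square)
    moreover have "u\<^sup>2 \<le> (1 - r)\<^sup>2 / t" unfolding u_def power_divide using assms
      by (intro divide_left_mono) (auto simp: power2_eq_square)
    ultimately show ?thesis by simp
  qed
  finally show ?thesis .
qed

lemma centred_Krem_moments:
  defines "h \<equiv> \<lambda>v. Krem r t v - integral\<^sup>L Exp1 (Krem r t)"
  shows "integral\<^sup>L Exp1 h = 0" "integrable Exp1 (\<lambda>v. (h v)\<^sup>2)"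
    "integral\<^sup>L Exp1 (\<lambda>v. (h v)\<^sup>2) \<le> 6 * (1 - r)\<^sup>2 / t\<^sup>2"
proof -
  interpret Exp1: prob_space Exp1 by (rule prob_space_Exp1)
  define e where "e = integral\<^sup>L Exp1 (Krem r t)"
  note integrable_facts = Krem_integrable Krem_sq_integrable Exp1.prob_space[unfolded space_Exp1]
  show "integral\<^sup>L Exp1 h = 0"
    unfolding h_def by (subst Bochner_Integration.integral_diff) (use integrable_facts in simp_all)
  have h_sq: "(h v)\<^sup>2 = (Krem r t v)\<^sup>2 + e\<^sup>2 - 2 * e * Krem r t v" for v
    by (simp add: h_def e_def power2_diff algebra_simps)
  show "integrable Exp1 (\<lambda>v. (h v)\<^sup>2)" unfolding h_sq using integrable_facts by simp
  have "integral\<^sup>L Exp1 (\<lambda>v. (h v)\<^sup>2) = integral\<^sup>L Exp1 (\<lambda>v. (Krem r t v)\<^sup>2) - e\<^sup>2"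
    unfolding h_sq using integrable_facts by (simp add: e_def power2_eq_square)
  also have "\<dots> \<le> 6 * (1 - r)\<^sup>2 / t\<^sup>2" using mean_Krem_sq_bound zero_le_power2[of e] by linarith
  finally show "integral\<^sup>L Exp1 (\<lambda>v. (h v)\<^sup>2) \<le> 6 * (1 - r)\<^sup>2 / t\<^sup>2" .
qed

end

section \<open>Normal limits of Erlang laws and a Slutsky lemma\<close>

definition Phi :: "real \<Rightarrow> real" where
  "Phi = cdf std_normal_distribution"

lemma isCont_Phi: "isCont Phi x"
proof -
  interpret real_distribution std_normal_distribution by (rule real_dist_normal_dist)
  have "emeasure std_normal_distribution {x} = 0"
    by (subst emeasure_density) (auto intro!: nn_integral_null_set)
  then have "measure std_normal_distribution {x} = 0" by (simp add: measure_def)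
  then show ?thesis unfolding Phi_def using isCont_cdf by simp
qed

definition iid_Exp1 :: "(nat \<Rightarrow> real) measure" where
  "iid_Exp1 = PiM UNIV (\<lambda>_. Exp1)"

interpretation iid_Exp1: product_prob_space "\<lambda>_::nat. Exp1" UNIV
  unfolding product_prob_space_def product_prob_space_axioms_def product_sigma_finite_def
  using prob_space_Exp1 prob_space_imp_sigma_finite by blast

lemma prob_space_iid_Exp1: "prob_space iid_Exp1"
  unfolding iid_Exp1_def by (rule iid_Exp1.P.prob_space_axioms)

lemma iid_Exp1_component_law: "distr iid_Exp1 borel (\<lambda>\<omega>. \<omega> i) = Exp1"
proof -
  have "distr iid_Exp1 borel (\<lambda>\<omega>. \<omega> i) = distr iid_Exp1 Exp1 (\<lambda>\<omega>. \<omega> i)"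
    by (rule distr_cong) auto
  also have "\<dots> = Exp1" unfolding iid_Exp1_def by (rule iid_Exp1.PiM_component) simp
  finally show ?thesis .
qed

lemma iid_Exp1_component_measurable[measurable]: "(\<lambda>\<omega>. \<omega> i) \<in> measurable iid_Exp1 borel"
proof -
  have "measurable iid_Exp1 borel = measurable iid_Exp1 Exp1" by (rule measurable_cong_sets) auto
  then show ?thesis
    using measurable_component_singleton[of i UNIV "\<lambda>_. Exp1"] by (simp add: iid_Exp1_def)
qed

lemma iid_Exp1_component_distributed:
  "distributed iid_Exp1 lborel (\<lambda>\<omega>. \<omega> i) (exponential_density 1)"
proof -
  have "distr iid_Exp1 lborel (\<lambda>\<omega>. \<omega> i) = distr iid_Exp1 borel (\<lambda>\<omega>. \<omega> i)"
    by (rule distr_cong) auto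
  then show ?thesis unfolding distributed_def by (simp add: iid_Exp1_component_law Exp1_def)
qed

lemma iid_Exp1_indep: "prob_space.indep_vars iid_Exp1 (\<lambda>i. borel) (\<lambda>i \<omega>. \<omega> i) UNIV"
proof -
  interpret prob_space iid_Exp1 by (rule prob_space_iid_Exp1)
  have "distr iid_Exp1 (PiM UNIV (\<lambda>i. borel)) (\<lambda>x. \<lambda>i\<in>UNIV. x i) = distr iid_Exp1 iid_Exp1 (\<lambda>x. x)"
    by (rule distr_cong) (auto simp: iid_Exp1_def intro!: sets_PiM_cong)
  also have "\<dots> = PiM UNIV (\<lambda>i::nat. Exp1)" by (simp add: iid_Exp1_def)
  also have "\<dots> = PiM UNIV (\<lambda>i. distr iid_Exp1 borel (\<lambda>\<omega>. \<omega> i))"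
    by (simp only: iid_Exp1_component_law)
  finally show ?thesis by (subst indep_vars_iff_distr_eq_PiM) auto
qed

text \<open>The distribution function of a standardised Erlang(m) variable, i.e. of
  \<open>(S - m)/\<surd>m\<close> for \<open>S\<close> a sum of \<open>m\<close> independent standard exponentials.\<close>
definition erlang_std_cdf :: "nat \<Rightarrow> real \<Rightarrow> real" where
  "erlang_std_cdf m x =
     measure (density lborel (erlang_density (m - 1) 1)) {s. (s - real m) / sqrt (real m) \<le> x}"

text \<open>Central limit theorem for Erlang laws, obtained from the CLT on the i.i.d. sequence.\<close>
lemma erlang_std_cdf_tendsto_Phi: "(\<lambda>m. erlang_std_cdf m x) \<longlonglongrightarrow> Phi x"
proof -
  interpret prob_space iid_Exp1 by (rule prob_space_iid_Exp1)
  let ?Z = "\<lambda>n \<omega>. (\<Sum>i<n. \<omega> i - 1) / sqrt (real n * 1\<^sup>2)"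
  have clt: "weak_conv_m (\<lambda>n. distr iid_Exp1 borel (?Z n)) std_normal_distribution"
  proof (rule central_limit_theorem)
    show "indep_vars (\<lambda>i. borel) (\<lambda>i \<omega>. \<omega> i) UNIV" by (rule iid_Exp1_indep)
    show "expectation (\<lambda>\<omega>. \<omega> n) = 1" for n
      using exponential_distributed_expectation[OF _ iid_Exp1_component_distributed] by simp
    show "integrable iid_Exp1 (\<lambda>\<omega>. (\<omega> n)\<^sup>2)" for n
      using erlang_ith_moment_integrable[OF _ iid_Exp1_component_distributed[of n], of 2] by simp
    show "variance (\<lambda>\<omega>. \<omega> n) = 1\<^sup>2" for n
      using exponential_distributed_variance[OF _ iid_Exp1_component_distributed] by simp
    show "distr iid_Exp1 borel (\<lambda>\<omega>. \<omega> n) = Exp1" for n by (rule iid_Exp1_component_law)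
  qed simp
  have cdf_eq: "cdf (distr iid_Exp1 borel (?Z n)) x = erlang_std_cdf n x" if n: "n \<ge> 1" for n
  proof -
    have D: "distributed iid_Exp1 lborel (\<lambda>\<omega>. \<Sum>i\<in>{..<n}. \<omega> i) (erlang_density (card {..<n} - 1) 1)"
      by (rule exponential_distributed_sum)
         (use n iid_Exp1_component_distributed indep_vars_subset[OF iid_Exp1_indep]
          in \<open>auto simp: lessThan_empty_iff\<close>)
    have "cdf (distr iid_Exp1 borel (?Z n)) x = measure iid_Exp1 {\<omega>\<in>space iid_Exp1. ?Z n \<omega> \<le> x}"
      unfolding cdf_def by (subst measure_distr) (auto intro!: arg_cong[where f="measure iid_Exp1"])
    also have "\<dots> = measure iid_Exp1
        ((\<lambda>\<omega>. \<Sum>i\<in>{..<n}. \<omega> i) -` {s. (s - real n) / sqrt (real n) \<le> x} \<inter> space iid_Exp1)"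
      by (intro arg_cong[where f="measure iid_Exp1"]) (auto simp: sum_subtractf)
    also have "\<dots> = measure (distr iid_Exp1 lborel (\<lambda>\<omega>. \<Sum>i\<in>{..<n}. \<omega> i))
        {s. (s - real n) / sqrt (real n) \<le> x}"
      by (subst measure_distr) auto
    also have "\<dots> = erlang_std_cdf n x"
      unfolding distributed_distr_eq_density[OF D] erlang_std_cdf_def by simp
    finally show ?thesis .
  qed
  have "(\<lambda>n. cdf (distr iid_Exp1 borel (?Z n)) x) \<longlonglongrightarrow> Phi x"
    using clt isCont_Phi unfolding weak_conv_m_def weak_conv_def Phi_def by blast
  then show ?thesis
    by (rule Lim_transform_eventually) (use cdf_eq in \<open>auto intro!: eventually_sequentiallyI[of 1]\<close>)
qed

lemma cdf_perturbation_bounds: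
  fixes Y Z :: "'a \<Rightarrow> real"
  assumes "prob_space M" and [measurable]: "Y \<in> borel_measurable M" "Z \<in> borel_measurable M"
  shows "measure M {\<omega>\<in>space M. Z \<omega> \<le> x}
           \<le> measure M {\<omega>\<in>space M. Y \<omega> \<le> x + d} + measure M {\<omega>\<in>space M. d < \<bar>Z \<omega> - Y \<omega>\<bar>}"
    and "measure M {\<omega>\<in>space M. Y \<omega> \<le> x - d}
           \<le> measure M {\<omega>\<in>space M. Z \<omega> \<le> x} + measure M {\<omega>\<in>space M. d < \<bar>Z \<omega> - Y \<omega>\<bar>}"
proof -
  interpret prob_space M by fact
  have "measure M {\<omega>\<in>space M. Z \<omega> \<le> x}
      \<le> measure M ({\<omega>\<in>space M. Y \<omega> \<le> x + d} \<union> {\<omega>\<in>space M. d < \<bar>Z \<omega> - Y \<omega>\<bar>})"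
    by (intro finite_measure_mono) (auto simp: not_less)
  also have "\<dots> \<le> measure M {\<omega>\<in>space M. Y \<omega> \<le> x + d} + measure M {\<omega>\<in>space M. d < \<bar>Z \<omega> - Y \<omega>\<bar>}"
    by (intro measure_subadditive) auto
  finally show "measure M {\<omega>\<in>space M. Z \<omega> \<le> x}
      \<le> measure M {\<omega>\<in>space M. Y \<omega> \<le> x + d} + measure M {\<omega>\<in>space M. d < \<bar>Z \<omega> - Y \<omega>\<bar>}" .
  have "measure M {\<omega>\<in>space M. Y \<omega> \<le> x - d}
      \<le> measure M ({\<omega>\<in>space M. Z \<omega> \<le> x} \<union> {\<omega>\<in>space M. d < \<bar>Z \<omega> - Y \<omega>\<bar>})"
    by (intro finite_measure_mono) (auto simp: not_less)
  also have "\<dots> \<le> measure M {\<omega>\<in>space M. Z \<omega> \<le> x} + measure M {\<omega>\<in>space M. d < \<bar>Z \<omega> - Y \<omega>\<bar>}"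
    by (intro measure_subadditive) auto
  finally show "measure M {\<omega>\<in>space M. Y \<omega> \<le> x - d}
      \<le> measure M {\<omega>\<in>space M. Z \<omega> \<le> x} + measure M {\<omega>\<in>space M. d < \<bar>Z \<omega> - Y \<omega>\<bar>}" .
qed

lemma slutsky_Phi:
  fixes P :: "nat \<Rightarrow> 'a measure" and Y Z :: "nat \<Rightarrow> 'a \<Rightarrow> real"
  assumes prob: "\<And>n. prob_space (P n)"
    and measY: "\<And>n. Y n \<in> borel_measurable (P n)" and measZ: "\<And>n. Z n \<in> borel_measurable (P n)"
    and Y_conv: "\<And>y. (\<lambda>n. measure (P n) {\<omega>\<in>space (P n). Y n \<omega> \<le> y}) \<longlonglongrightarrow> Phi y"
    and close: "\<And>d. d > 0 \<Longrightarrow> (\<lambda>n. measure (P n) {\<omega>\<in>space (P n). d < \<bar>Z n \<omega> - Y n \<omega>\<bar>}) \<longlonglongrightarrow> 0"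
  shows "(\<lambda>n. measure (P n) {\<omega>\<in>space (P n). Z n \<omega> \<le> x}) \<longlonglongrightarrow> Phi x"
proof (rule tendstoI)
  fix e :: real assume e: "0 < e"
  obtain d where d: "d > 0" and Phi_near: "\<And>y. \<bar>y - x\<bar> < d \<Longrightarrow> \<bar>Phi y - Phi x\<bar> < e / 2"
    using isCont_Phi[of x] e unfolding continuous_at_eps_delta dist_real_def by (metis half_gt_zero)
  define h where "h = d / 2"
  have h: "0 < h" "\<bar>Phi (x + h) - Phi x\<bar> < e / 2" "\<bar>Phi (x - h) - Phi x\<bar> < e / 2"
    using d Phi_near by (auto simp: h_def)
  have "eventually (\<lambda>n. measure (P n) {\<omega>\<in>space (P n). Y n \<omega> \<le> x + h} < Phi (x + h) + e / 4) sequentially"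
    "eventually (\<lambda>n. Phi (x - h) - e / 4 < measure (P n) {\<omega>\<in>space (P n). Y n \<omega> \<le> x - h}) sequentially"
    "eventually (\<lambda>n. measure (P n) {\<omega>\<in>space (P n). h < \<bar>Z n \<omega> - Y n \<omega>\<bar>} < e / 4) sequentially"
    using Y_conv[of "x + h"] Y_conv[of "x - h"] close[OF h(1)] e by (auto intro!: order_tendstoD)
  then show "eventually (\<lambda>n. dist (measure (P n) {\<omega>\<in>space (P n). Z n \<omega> \<le> x}) (Phi x) < e) sequentially"
  proof eventually_elim
    case (elim n)
    note cdf_perturbation_bounds[OF prob measY measZ, of n x h]
    then show ?case using elim h unfolding dist_real_def abs_less_iff by linarith
  qed
qed

section \<open>Upper order statistics of an exponential sample tend to infinity\<close>

lemma sorted_count_le: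
  fixes xs :: "real list"
  assumes "sorted xs" "1 \<le> j" "j \<le> length xs" "xs ! (j - 1) \<le> C"
  shows "real j \<le> (\<Sum>l<length xs. if xs ! l \<le> C then 1 else 0)"
proof -
  have "(\<Sum>l<j. if xs ! l \<le> C then 1 else (0::real)) \<le> (\<Sum>l<length xs. if xs ! l \<le> C then 1 else 0)"
    using assms(3) by (intro sum_mono2) auto
  moreover have "(\<Sum>l<j. if xs ! l \<le> C then 1 else (0::real)) = (\<Sum>l<j. 1)"
  proof (intro sum.cong refl)
    fix l assume "l \<in> {..<j}"
    then have "xs ! l \<le> xs ! (j - 1)" using assms by (intro sorted_nth_mono) auto
    then show "(if xs ! l \<le> C then 1 else (0::real)) = 1" using assms(4) by simp
  qed
  ultimately show ?thesis by simp
qed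

lemma order_stat_le_count:
  assumes "1 \<le> j" "j \<le> n" "order_stat n x j \<le> C"
  shows "real j \<le> (\<Sum>i<n. if x i \<le> C then 1 else 0)"
proof -
  let ?ys = "sort (map x [0..<n])"
  have "real j \<le> (\<Sum>l<length ?ys. if ?ys ! l \<le> C then 1 else 0)"
    using assms by (intro sorted_count_le) (auto simp: order_stat_def)
  also have "\<dots> = sum_list (map (\<lambda>v. if v \<le> C then 1 else 0) ?ys)"
    by (simp add: sum_list_sum_nth atLeast0LessThan)
  also have "\<dots> = sum_list (map (\<lambda>v. if v \<le> C then 1 else 0) (map x [0..<n]))"
    by (simp only: sum_mset_sum_list[symmetric] mset_map mset_sort)
  also have "\<dots> = (\<Sum>i<n. if x i \<le> C then 1 else 0)"
    by (simp add: sum_set_upt_conv_sum_list_nat[symmetric] atLeast0LessThan comp_def)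
  finally show ?thesis .
qed

lemma order_stat_le_few_exceed:
  assumes "1 \<le> k" "k \<le> n" "order_stat n x (n - k + 1) \<le> C"
  shows "(\<Sum>i<n. indicator {C<..} (x i)) \<le> real k - (1::real)"
proof -
  have "real (n - k + 1) \<le> (\<Sum>i<n. if x i \<le> C then 1 else 0)"
    using assms by (intro order_stat_le_count) auto
  moreover have "(\<Sum>i<n. indicator {C<..} (x i)) = (\<Sum>i<n. 1 - (if x i \<le> C then 1 else 0::real))"
    by (intro sum.cong) (auto simp: indicator_def)
  ultimately show ?thesis using assms(2) by (simp add: sum_subtractf of_nat_diff)
qed

text \<open>Hoeffding bound: with \<open>p = P(X > C) = e\<^sup>-\<^sup>C\<close> and \<open>k < n p / 2\<close>, the \<open>(n-k+1)\<close>-th order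
  statistic is \<open>\<le> C\<close> only if fewer than \<open>k\<close> of the \<open>n\<close> values exceed \<open>C\<close>, an event of probability
  at most \<open>exp(-p\<^sup>2/2)\<^sup>n\<close>.\<close>
lemma order_stat_le_prob_bound:
  fixes M :: "'a measure" and X :: "nat \<Rightarrow> 'a \<Rightarrow> real"
  assumes prob: "prob_space M"
    and X_exp: "\<And>i. i < n \<Longrightarrow> distributed M lborel (X i) (exponential_density 1)"
    and X_indep: "prob_space.indep_vars M (\<lambda>_. borel) X {..<n}"
    and C: "0 \<le> C" and p: "p = exp (- C)"
    and k: "1 \<le> k" "real k < real n * p / 2"
  shows "measure M {\<omega> \<in> space M. order_stat n (\<lambda>j. X j \<omega>) (n - k + 1) \<le> C} \<le> exp (- (p\<^sup>2 / 2)) ^ n"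
proof -
  interpret prob_space M by (rule prob)
  have p01: "0 < p" "p \<le> 1" using C p by auto
  have "real n * p \<le> real n * 1" by (rule mult_left_mono) (use p01 in auto)
  then have kn: "k \<le> n" "1 \<le> n" using k p01 by auto
  define Y :: "nat \<Rightarrow> 'a \<Rightarrow> real" where "Y i = indicator {\<omega>. C < X i \<omega>}" for i
  have X_rv[measurable]: "i < n \<Longrightarrow> random_variable borel (X i)" for i
    using X_exp[of i] by (auto dest: distributed_measurable)
  have EY: "expectation (Y i) = p" if i: "i < n" for i
  proof -
    have "expectation (Y i) = prob {\<omega> \<in> space M. C < X i \<omega>}" unfolding Y_def
      by (subst Bochner_Integration.integral_indicator) (auto intro!: arg_cong[where f=prob])
    also have "\<dots> = p" using exponential_distributedD_gt[OF X_exp[OF i] C] by (simp add: p)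
    finally show ?thesis .
  qed
  interpret H: Hoeffding_ineq M "{..<n}" Y "\<lambda>_. 0" "\<lambda>_. 1" "\<Sum>i<n. expectation (Y i)"
  proof unfold_locales
    show "indep_vars (\<lambda>_. borel) Y {..<n}"
      unfolding Y_def
      using indep_vars_compose2[OF X_indep, of "\<lambda>i v. indicator {C<..} v" "\<lambda>_. borel"]
      by (rule indep_vars_cong[THEN iffD1, rotated 3]) (auto simp: indicator_def)
    show "AE x in M. Y i x \<in> {0..1}" for i by (auto simp: Y_def indicator_def)
  qed auto
  have mean: "(\<Sum>i<n. expectation (Y i)) = real n * p" using EY by simp
  have sub: "{\<omega> \<in> space M. order_stat n (\<lambda>j. X j \<omega>) (n - k + 1) \<le> C}
      \<subseteq> {\<omega>\<in>space M. (\<Sum>i\<in>{..<n}. Y i \<omega>) \<le> (\<Sum>i<n. expectation (Y i)) - real n * p / 2}"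
  proof clarify
    fix \<omega> assume \<omega>: "\<omega> \<in> space M" and le: "order_stat n (\<lambda>j. X j \<omega>) (n - k + 1) \<le> C"
    have "(\<Sum>i<n. Y i \<omega>) = (\<Sum>i<n. indicator {C<..} (X i \<omega>))"
      by (simp add: Y_def indicator_def)
    also have "\<dots> \<le> real k - 1" using kn k le by (intro order_stat_le_few_exceed) auto
    finally have "(\<Sum>i<n. Y i \<omega>) \<le> real k - 1" .
    then show "(\<Sum>i\<in>{..<n}. Y i \<omega>) \<le> (\<Sum>i<n. expectation (Y i)) - real n * p / 2"
      unfolding mean using k by linarith
  qed
  have "measure M {\<omega> \<in> space M. order_stat n (\<lambda>j. X j \<omega>) (n - k + 1) \<le> C}
      \<le> prob {\<omega>\<in>space M. (\<Sum>i\<in>{..<n}. Y i \<omega>) \<le> (\<Sum>i<n. expectation (Y i)) - real n * p / 2}"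
    by (rule finite_measure_mono[OF sub]) (unfold Y_def, measurable)
  also have "\<dots> \<le> exp (-2 * (real n * p / 2)\<^sup>2 / (\<Sum>i\<in>{..<n}. (1 - 0)\<^sup>2))"
    by (rule H.Hoeffding_ineq_le) (use p01 kn in auto)
  also have "\<dots> = exp (real n * (- (p\<^sup>2 / 2)))"
    using kn by (simp add: power2_eq_square field_simps)
  also have "\<dots> = exp (- (p\<^sup>2 / 2)) ^ n" by (rule exp_of_nat_mult)
  finally show ?thesis .
qed

lemma order_stat_tendsto_infinity:
  fixes M :: "nat \<Rightarrow> 'a measure" and k :: "nat \<Rightarrow> nat" and X :: "nat \<Rightarrow> nat \<Rightarrow> 'a \<Rightarrow> real"
  assumes k_inf: "filterlim k at_top sequentially"
    and k_n: "(\<lambda>n. real (k n) / real n) \<longlonglongrightarrow> 0"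
    and prob: "\<And>n. prob_space (M n)"
    and X_exp: "\<And>n i. i < n \<Longrightarrow> distributed (M n) lborel (X n i) (exponential_density 1)"
    and X_indep: "\<And>n. prob_space.indep_vars (M n) (\<lambda>_. borel) (X n) {..<n}"
    and C: "0 \<le> C"
  shows "(\<lambda>n. measure (M n) {\<omega> \<in> space (M n). order_stat n (\<lambda>j. X n j \<omega>) (n - k n + 1) \<le> C}) \<longlonglongrightarrow> 0"
proof (rule Lim_null_comparison)
  define p where "p = exp (- C)"
  have p: "0 < p" "p \<le> 1" using C by (auto simp: p_def)
  have "eventually (\<lambda>n. real (k n) / real n < p / 2) sequentially"
    using k_n p by (intro order_tendstoD) auto
  moreover have "eventually (\<lambda>n. 1 \<le> k n) sequentially"
    using k_inf by (simp add: filterlim_at_top)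
  moreover have "eventually (\<lambda>n. 1 \<le> n) sequentially" by (rule eventually_ge_at_top)
  ultimately show "eventually (\<lambda>n. norm (measure (M n)
      {\<omega> \<in> space (M n). order_stat n (\<lambda>j. X n j \<omega>) (n - k n + 1) \<le> C}) \<le> exp (- (p\<^sup>2 / 2)) ^ n) sequentially"
  proof eventually_elim
    case (elim n)
    have "real (k n) < real n * p / 2" using elim by (simp add: field_simps)
    then show ?case
      using order_stat_le_prob_bound[OF prob X_exp X_indep C p_def elim(2)] by simp
  qed
  show "(\<lambda>n. exp (- (p\<^sup>2 / 2)) ^ n) \<longlonglongrightarrow> 0"
    by (rule LIMSEQ_realpow_zero) (use p in auto)
qed

text \<open>Conditioning on an independent variable: if every section \<open>{\<omega>. (x, Y \<omega>) \<in> P}\<close> has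
  probability at most \<open>B\<close>, so has \<open>{\<omega>. (X \<omega>, Y \<omega>) \<in> P}\<close> (Fubini for the joint law).\<close>
lemma indep_section_measure_bound:
  assumes prob: "prob_space M" and ind: "prob_space.indep_var M S X N Y"
    and P: "P \<in> sets (S \<Otimes>\<^sub>M N)" and B: "0 \<le> B"
    and sections: "\<And>x. x \<in> space S \<Longrightarrow> measure M {\<omega>\<in>space M. (x, Y \<omega>) \<in> P} \<le> B"
  shows "measure M {\<omega>\<in>space M. (X \<omega>, Y \<omega>) \<in> P} \<le> B"
proof -
  interpret prob_space M by fact
  have rv: "random_variable S X" "random_variable N Y"
    and joint: "distr M S X \<Otimes>\<^sub>M distr M N Y = distr M (S \<Otimes>\<^sub>M N) (\<lambda>x. (X x, Y x))"
    using ind unfolding indep_var_distribution_eq by auto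
  interpret DX: prob_space "distr M S X" by (rule prob_space_distr) (fact rv)
  interpret DY: prob_space "distr M N Y" by (rule prob_space_distr) fact
  have rv_pair: "(\<lambda>x. (X x, Y x)) \<in> measurable M (S \<Otimes>\<^sub>M N)" using rv by measurable
  have "emeasure M {\<omega>\<in>space M. (X \<omega>, Y \<omega>) \<in> P} = emeasure (distr M (S \<Otimes>\<^sub>M N) (\<lambda>x. (X x, Y x))) P"
    using rv_pair P by (subst emeasure_distr) (auto intro!: arg_cong[where f="emeasure M"])
  also have "\<dots> = (\<integral>\<^sup>+x. emeasure (distr M N Y) (Pair x -` P) \<partial>distr M S X)"
    unfolding joint[symmetric] using P
    by (intro DY.emeasure_pair_measure_alt) (simp add: sets_pair_measure_cong[OF sets_distr sets_distr])
  also have "\<dots> \<le> (\<integral>\<^sup>+x. ennreal B \<partial>distr M S X)"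
  proof (intro nn_integral_mono)
    fix x assume x: "x \<in> space (distr M S X)"
    have "Pair x -` P \<in> sets N" using P x by (intro sets_Pair1) auto
    then have "emeasure (distr M N Y) (Pair x -` P) = emeasure M (Y -` (Pair x -` P) \<inter> space M)"
      using rv by (subst emeasure_distr) auto
    also have "\<dots> = ennreal (measure M {\<omega>\<in>space M. (x, Y \<omega>) \<in> P})"
      by (simp add: emeasure_eq_measure Int_def conj_commute)
    also have "\<dots> \<le> ennreal B" using sections x by (intro ennreal_leI) auto
    finally show "emeasure (distr M N Y) (Pair x -` P) \<le> ennreal B" .
  qed
  also have "\<dots> = ennreal B" using DX.emeasure_space_1 by simp
  finally show ?thesis using B by (simp add: emeasure_eq_measure)
qed

lemma indep_var_of_indep_vars:
  assumes "prob_space M" "prob_space.indep_vars M (\<lambda>_. borel) Z I" "i \<in> I" "j \<in> I" "i \<noteq> j"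
  shows "prob_space.indep_var M borel (Z i) borel (Z j)"
proof -
  interpret prob_space M by fact
  have "indep_var borel ((\<lambda>f. f i) \<circ> (\<lambda>\<omega>. restrict (\<lambda>i. Z i \<omega>) {i}))
                  borel ((\<lambda>f. f j) \<circ> (\<lambda>\<omega>. restrict (\<lambda>i. Z i \<omega>) {j}))"
    using assms by (intro indep_var_compose[OF indep_var_restrict[OF assms(2)]]) auto
  also have "(\<lambda>f. f i) \<circ> (\<lambda>\<omega>. restrict (\<lambda>i. Z i \<omega>) {i}) = Z i" by auto
  also have "(\<lambda>f. f j) \<circ> (\<lambda>\<omega>. restrict (\<lambda>i. Z i \<omega>) {j}) = Z j" by auto
  finally show ?thesis .
qed

lemma indep_centred_sum_second_moment:
  fixes Z :: "'i \<Rightarrow> 'a \<Rightarrow> real"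
  assumes prob: "prob_space M" and fin: "finite I" and ind: "prob_space.indep_vars M (\<lambda>_. borel) Z I"
    and sq: "\<And>i. i \<in> I \<Longrightarrow> integrable M (\<lambda>\<omega>. (Z i \<omega>)\<^sup>2)"
    and centred: "\<And>i. i \<in> I \<Longrightarrow> integral\<^sup>L M (Z i) = 0"
  shows "integrable M (\<lambda>\<omega>. (\<Sum>i\<in>I. Z i \<omega>)\<^sup>2)"
    "integral\<^sup>L M (\<lambda>\<omega>. (\<Sum>i\<in>I. Z i \<omega>)\<^sup>2) = (\<Sum>i\<in>I. integral\<^sup>L M (\<lambda>\<omega>. (Z i \<omega>)\<^sup>2))"
proof -
  interpret prob_space M by fact
  have rv[measurable]: "i \<in> I \<Longrightarrow> Z i \<in> borel_measurable M" for i
    using ind unfolding indep_vars_def by blast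
  have int: "integrable M (Z i)" if "i \<in> I" for i
    using square_integrable_imp_integrable[OF rv[OF that] sq[OF that]] .
  have prod: "integrable M (\<lambda>\<omega>. Z i \<omega> * Z j \<omega>) \<and>
      integral\<^sup>L M (\<lambda>\<omega>. Z i \<omega> * Z j \<omega>) = (if i = j then integral\<^sup>L M (\<lambda>\<omega>. (Z i \<omega>)\<^sup>2) else 0)"
    if ij: "i \<in> I" "j \<in> I" for i j
  proof (cases "i = j")
    case True
    then show ?thesis using sq[OF ij(1)] by (simp add: power2_eq_square)
  next
    case False
    note indep = indep_var_of_indep_vars[OF prob ind ij False]
    have "integral\<^sup>L M (\<lambda>\<omega>. Z i \<omega> * Z j \<omega>) = integral\<^sup>L M (Z i) * integral\<^sup>L M (Z j)"
      by (rule indep_var_lebesgue_integral[OF indep int int]) (use ij in auto)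
    then show ?thesis
      using False centred ij indep_var_integrable[OF indep int int] by simp
  qed
  have square: "(\<lambda>\<omega>. (\<Sum>i\<in>I. Z i \<omega>)\<^sup>2) = (\<lambda>\<omega>. \<Sum>i\<in>I. \<Sum>j\<in>I. Z i \<omega> * Z j \<omega>)"
    by (simp add: power2_eq_square sum_product)
  show "integrable M (\<lambda>\<omega>. (\<Sum>i\<in>I. Z i \<omega>)\<^sup>2)"
    unfolding square using prod by (intro Bochner_Integration.integrable_sum) auto
  have "integral\<^sup>L M (\<lambda>\<omega>. (\<Sum>i\<in>I. Z i \<omega>)\<^sup>2) = (\<Sum>i\<in>I. \<Sum>j\<in>I. integral\<^sup>L M (\<lambda>\<omega>. Z i \<omega> * Z j \<omega>))"
    unfolding square using prod
    by (simp add: Bochner_Integration.integral_sum Bochner_Integration.integrable_sum)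
  also have "\<dots> = (\<Sum>i\<in>I. \<Sum>j\<in>I. if i = j then integral\<^sup>L M (\<lambda>\<omega>. (Z i \<omega>)\<^sup>2) else 0)"
    using prod by (intro sum.cong) auto
  also have "\<dots> = (\<Sum>i\<in>I. integral\<^sup>L M (\<lambda>\<omega>. (Z i \<omega>)\<^sup>2))"
    using fin by (simp add: sum.delta)
  finally show "integral\<^sup>L M (\<lambda>\<omega>. (\<Sum>i\<in>I. Z i \<omega>)\<^sup>2) = (\<Sum>i\<in>I. integral\<^sup>L M (\<lambda>\<omega>. (Z i \<omega>)\<^sup>2))" .
qed

section \<open>Deterministic comparison with the standardised sum\<close>

lemma sqrt_near_one:
  fixes Q :: real
  assumes "1 / 2 \<le> Q"
  shows "1 / 2 \<le> sqrt Q" "\<bar>sqrt Q - 1\<bar> \<le> \<bar>Q - 1\<bar>"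
proof -
  have pos: "0 < sqrt Q" using assms by simp
  have sq: "(sqrt Q)\<^sup>2 = Q" using assms by simp
  show "1 / 2 \<le> sqrt Q"
  proof (rule ccontr)
    assume "\<not> 1 / 2 \<le> sqrt Q"
    then have "(sqrt Q)\<^sup>2 < (1/2)\<^sup>2" using pos by (intro power_strict_mono) auto
    then show False using sq assms by (simp add: power2_eq_square)
  qed
  have "\<bar>sqrt Q - 1\<bar> * (sqrt Q + 1) = \<bar>(sqrt Q - 1) * (sqrt Q + 1)\<bar>" using pos by (simp add: abs_mult)
  also have "(sqrt Q - 1) * (sqrt Q + 1) = Q - 1" using sq by (simp add: power2_eq_square algebra_simps)
  finally have "\<bar>sqrt Q - 1\<bar> * (sqrt Q + 1) = \<bar>Q - 1\<bar>" .
  moreover have "\<bar>sqrt Q - 1\<bar> \<le> \<bar>sqrt Q - 1\<bar> * (sqrt Q + 1)" using pos by (simp add: mult_le_cancel_left1)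
  ultimately show "\<bar>sqrt Q - 1\<bar> \<le> \<bar>Q - 1\<bar>" by simp
qed

lemma sqrt_ratio_deficit:
  assumes "1 \<le> m"
  shows "sqrt (real m) / sqrt (real m + 1) \<le> 1" "1 - sqrt (real m) / sqrt (real m + 1) \<le> 1 / (real m + 1)"
proof -
  define q where "q = sqrt (real m) / sqrt (real m + 1)"
  have q0: "0 \<le> q" by (simp add: q_def)
  have qq: "q\<^sup>2 = real m / (real m + 1)" unfolding q_def by (simp add: power_divide)
  then have "q\<^sup>2 \<le> 1" by simp
  then have q1: "q \<le> 1" using q0 by (simp add: power_le_one_iff)
  then show "sqrt (real m) / sqrt (real m + 1) \<le> 1" by (simp add: q_def)
  have "q\<^sup>2 \<le> q" using q1 q0 by (simp add: power2_eq_square mult_left_le)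
  moreover have "1 - q\<^sup>2 = 1 / (real m + 1)" unfolding qq by (simp add: field_simps)
  ultimately show "1 - sqrt (real m) / sqrt (real m + 1) \<le> 1 / (real m + 1)" by (simp add: q_def)
qed

lemma abs_div_le_twice:
  fixes a x :: real
  assumes "1 / 2 \<le> a"
  shows "\<bar>x\<bar> / a \<le> 2 * \<bar>x\<bar>"
proof -
  have "1 * \<bar>x\<bar> \<le> (2 * a) * \<bar>x\<bar>" by (rule mult_right_mono) (use assms in auto)
  then show ?thesis using assms by (simp add: divide_le_eq mult_ac)
qed

lemma normalised_statistic_via_Krem:
  fixes F :: "nat \<Rightarrow> real"
  assumes r: "r \<le> 0" and t: "0 < t" and Q: "0 < scaled_var r t" and kk: "card I + 1 = kk"
  shows "sqrt (real kk) / sigma_fun r t * ((1 / real kk) * (\<Sum>i\<in>I. Kfun r (1 + F i / t)) - mu_fun r t)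
    = (((\<Sum>i\<in>I. F i) - real (card I)) + (\<Sum>i\<in>I. (Krem r t (F i) - integral\<^sup>L Exp1 (Krem r t)))
        - (1 + integral\<^sup>L Exp1 (Krem r t))) / (sqrt (scaled_var r t) * sqrt (real kk))"
proof -
  define EG where "EG = integral\<^sup>L Exp1 (Krem r t)"
  define a where "a = sqrt (scaled_var r t)"
  have a: "0 < a" using Q by (simp add: a_def)
  have kk_pos: "0 < real kk" using kk by simp
  have sigma: "sigma_fun r t = a / t" using t_sigma_eq[OF t] t by (simp add: a_def field_simps)
  have mu: "mu_fun r t = (1 + EG) / t" using mu_via_Krem[OF r t] t by (simp add: EG_def field_simps)
  have Ksum: "(\<Sum>i\<in>I. Kfun r (1 + F i / t)) = ((\<Sum>i\<in>I. F i) + (\<Sum>i\<in>I. Krem r t (F i))) / t"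
    by (simp add: Kfun_via_Krem[OF r t] sum_divide_distrib[symmetric] sum.distrib)
  have W: "(\<Sum>i\<in>I. (Krem r t (F i) - EG)) = (\<Sum>i\<in>I. Krem r t (F i)) - real (card I) * EG"
    by (simp add: sum_subtractf)
  have "sqrt (real kk) / sigma_fun r t * ((1 / real kk) * (\<Sum>i\<in>I. Kfun r (1 + F i / t)) - mu_fun r t)
      = ((\<Sum>i\<in>I. F i) + (\<Sum>i\<in>I. Krem r t (F i)) - real kk * (1 + EG)) / (a * sqrt (real kk))"
    unfolding sigma mu Ksum using t a kk_pos by (simp add: field_simps)
  then show ?thesis
    unfolding EG_def[symmetric] a_def[symmetric] W kk[symmetric] by (simp add: algebra_simps)
qed

lemma statistic_vs_standardised_sum:
  fixes r t :: real and F :: "nat \<Rightarrow> real" and I :: "nat set" and kk :: nat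
  assumes r: "r \<le> 0" and t1: "1 \<le> t" and tc: "30 * (1 - r)\<^sup>2 \<le> t"
    and kk: "card I + 1 = kk" and m1: "1 \<le> card I"
  shows "\<bar>sqrt (real kk) / sigma_fun r t * ((1 / real kk) * (\<Sum>i\<in>I. Kfun r (1 + F i / t)) - mu_fun r t)
          - ((\<Sum>i\<in>I. F i) - real (card I)) / sqrt (real (card I))\<bar>
     \<le> \<bar>((\<Sum>i\<in>I. F i) - real (card I)) / sqrt (real (card I))\<bar> * (2 / real kk + 30 * (1 - r)\<^sup>2 / t)
        + 2 * \<bar>\<Sum>i\<in>I. (Krem r t (F i) - integral\<^sup>L Exp1 (Krem r t))\<bar> / sqrt (real kk) + 2 / sqrt (real kk)"
proof -
  define c where "c = 1 - r"
  have t: "0 < t" using t1 by simp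
  define m where "m = card I"
  define b where "b = 1 + integral\<^sup>L Exp1 (Krem r t)"
  define Q where "Q = scaled_var r t"
  define a where "a = sqrt Q"
  define W where "W = (\<Sum>i\<in>I. (Krem r t (F i) - integral\<^sup>L Exp1 (Krem r t)))"
  define A where "A = ((\<Sum>i\<in>I. F i) - real m) / sqrt (real m)"
  define q where "q = sqrt (real m) / sqrt (real kk)"
  have m: "1 \<le> m" "real kk = real m + 1" using m1 kk by (auto simp: m_def)
  have skk: "0 < sqrt (real kk)" and sm: "0 < sqrt (real m)" using m by auto
  have "c \<le> 30 * c\<^sup>2" using r by (simp add: c_def power2_eq_square)
  then have "c / t \<le> 1" using tc t by (simp add: c_def)
  then have b: "0 \<le> b" "b \<le> 1" using mean_Krem_bounds[OF r t] by (auto simp: b_def c_def)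
  have Q_near: "\<bar>Q - 1\<bar> \<le> 15 * c\<^sup>2 / t" using scaled_var_close_to_one[OF r t t1] by (simp add: Q_def c_def)
  moreover have "15 * c\<^sup>2 / t \<le> 1 / 2" using tc t by (simp add: c_def field_simps)
  ultimately have "1 / 2 \<le> Q" by (simp add: abs_le_iff)
  note a_near = sqrt_near_one[OF this, folded a_def]
  have a0: "0 < a" using a_near by simp
  have q: "0 \<le> q" "q \<le> 1" "1 - q \<le> 1 / real kk"
    using sqrt_ratio_deficit[OF m(1)] by (simp_all add: q_def m(2))
  have Z: "sqrt (real kk) / sigma_fun r t * ((1 / real kk) * (\<Sum>i\<in>I. Kfun r (1 + F i / t)) - mu_fun r t)
      = (A * sqrt (real m) + W - b) / (a * sqrt (real kk))"
    using normalised_statistic_via_Krem[OF r t _ kk, of F] a0 sm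
    by (simp add: A_def W_def a_def Q_def b_def m_def)
  have decomp: "(A * sqrt (real m) + W - b) / (a * sqrt (real kk)) - A
      = A * (q / a - 1) + (W - b) / (a * sqrt (real kk))"
    unfolding q_def using a0 skk by (simp add: field_simps)
  have "\<bar>q / a - 1\<bar> = \<bar>q - a\<bar> / a" using a0 by (simp add: field_simps abs_divide)
  also have "\<dots> \<le> 2 * \<bar>q - a\<bar>" by (rule abs_div_le_twice[OF a_near(1)])
  also have "\<bar>q - a\<bar> \<le> (1 - q) + \<bar>a - 1\<bar>" using q by arith
  finally have rel: "\<bar>q / a - 1\<bar> \<le> 2 / real kk + 30 * c\<^sup>2 / t" using q(3) a_near(2) Q_near by simp
  have "\<bar>(W - b) / (a * sqrt (real kk))\<bar> = \<bar>W - b\<bar> / a / sqrt (real kk)"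
    using a0 skk by (simp add: abs_divide abs_mult)
  also have "\<dots> \<le> 2 * \<bar>W - b\<bar> / sqrt (real kk)"
    by (rule divide_right_mono[OF abs_div_le_twice[OF a_near(1)]]) simp
  also have "\<dots> \<le> 2 * \<bar>W\<bar> / sqrt (real kk) + 2 / sqrt (real kk)"
  proof -
    have "\<bar>W - b\<bar> \<le> \<bar>W\<bar> + 1" using b by arith
    then have "2 * \<bar>W - b\<bar> \<le> 2 * \<bar>W\<bar> + 2" by simp
    then show ?thesis unfolding add_divide_distrib[symmetric] by (rule divide_right_mono) simp
  qed
  finally have fluct: "\<bar>(W - b) / (a * sqrt (real kk))\<bar> \<le> 2 * \<bar>W\<bar> / sqrt (real kk) + 2 / sqrt (real kk)" .
  have "\<bar>A * (q / a - 1)\<bar> \<le> \<bar>A\<bar> * (2 / real kk + 30 * c\<^sup>2 / t)"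
    unfolding abs_mult by (rule mult_left_mono[OF rel]) simp
  with fluct have "\<bar>(A * sqrt (real m) + W - b) / (a * sqrt (real kk)) - A\<bar>
      \<le> \<bar>A\<bar> * (2 / real kk + 30 * c\<^sup>2 / t) + 2 * \<bar>W\<bar> / sqrt (real kk) + 2 / sqrt (real kk)"
    unfolding decomp using abs_triangle_ineq[of "A * (q / a - 1)" "(W - b) / (a * sqrt (real kk))"]
    by linarith
  then show ?thesis by (simp only: Z A_def W_def m_def c_def)
qed

lemma large_k_bounds:
  fixes L \<delta> :: real and kk :: nat
  assumes kk: "12 * L / \<delta> + 144 / \<delta>\<^sup>2 \<le> real kk" and L: "0 < L" and \<delta>: "0 < \<delta>"
  shows "2 * L / real kk \<le> \<delta> / 6" "2 / sqrt (real kk) \<le> \<delta> / 6"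
proof -
  have pos: "0 \<le> 144 / \<delta>\<^sup>2" "0 < 12 * L / \<delta>" using L \<delta> by simp_all
  have "(12 / \<delta>)\<^sup>2 = 144 / \<delta>\<^sup>2" by (simp add: power_divide)
  then have L_le: "12 * L / \<delta> \<le> real kk" and \<delta>_le: "(12 / \<delta>)\<^sup>2 \<le> real kk"
    using kk pos by linarith+
  have kpos: "0 < real kk" using L_le pos(2) by linarith
  show "2 * L / real kk \<le> \<delta> / 6" using L_le \<delta> kpos L by (simp add: field_simps)
  have "12 / \<delta> \<le> sqrt (real kk)" using \<delta>_le \<delta> by (simp add: real_le_rsqrt)
  then show "2 / sqrt (real kk) \<le> \<delta> / 6" using \<delta> kpos by (simp add: field_simps)
qed

section \<open>The probabilistic estimates\<close>

locale tail_statistic =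
  fixes M :: "nat \<Rightarrow> 'a measure"
    and k :: "nat \<Rightarrow> nat"
    and X F :: "nat \<Rightarrow> nat \<Rightarrow> 'a \<Rightarrow> real"
    and \<rho> :: real
  assumes k_inf: "filterlim k at_top sequentially"
    and k_n: "(\<lambda>n. real (k n) / real n) \<longlonglongrightarrow> 0"
    and prob: "\<And>n. prob_space (M n)"
    and X_exp: "\<And>n i. i < n \<Longrightarrow> distributed (M n) lborel (X n i) (exponential_density 1)"
    and X_indep: "\<And>n. prob_space.indep_vars (M n) (\<lambda>_. borel) (X n) {..<n}"
    and F_exp: "\<And>n j. j \<in> {1..k n - 1} \<Longrightarrow> distributed (M n) lborel (F n j) (exponential_density 1)"
    and EF_indep: "\<And>n. prob_space.indep_vars (M n) (\<lambda>_. borel)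
          (\<lambda>i \<omega>. if i = 0 then order_stat n (\<lambda>j. X n j \<omega>) (n - k n + 1) else F n i \<omega>)
          {0..k n - 1}"
    and rho: "\<rho> \<le> 0"
begin

definition "Etail n \<omega> = order_stat n (\<lambda>j. X n j \<omega>) (n - k n + 1)"
definition "Ycomp n i \<omega> = (if i = 0 then Etail n \<omega> else F n i \<omega>)"
definition "Fsum n \<omega> = (\<Sum>i\<in>{1..k n - 1}. F n i \<omega>)"
definition "Astd n \<omega> = (Fsum n \<omega> - real (k n - 1)) / sqrt (real (k n - 1))"
definition "Zstat n \<omega> = (let E = Etail n \<omega>;
               U = (1 / real (k n)) * (\<Sum>i = 1..k n - 1. Kfun \<rho> (1 + F n i \<omega> / E))
           in sqrt (real (k n)) / sigma_fun \<rho> E * (U - mu_fun \<rho> E))"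
definition "Krem_mean t = integral\<^sup>L Exp1 (Krem \<rho> t)"
definition "Wrem n t \<omega> = (\<Sum>i\<in>{1..k n - 1}. (Krem \<rho> t (F n i \<omega>) - Krem_mean t))"

lemma Ycomp_indep: "prob_space.indep_vars (M n) (\<lambda>_. borel) (Ycomp n) {0..k n - 1}"
  using EF_indep[of n] unfolding Ycomp_def Etail_def .

lemma Etail_measurable[measurable]: "Etail n \<in> borel_measurable (M n)"
proof -
  interpret prob_space "M n" by (rule prob)
  have "random_variable borel (Ycomp n 0)" using Ycomp_indep[of n] unfolding indep_vars_def by auto
  then show ?thesis by (simp add: Ycomp_def[abs_def])
qed

lemma F_measurable[measurable]: "i \<in> {1..k n - 1} \<Longrightarrow> F n i \<in> borel_measurable (M n)"
  using distributed_measurable[OF F_exp] by simp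

lemma F_indep: "prob_space.indep_vars (M n) (\<lambda>_. borel) (F n) {1..k n - 1}"
proof -
  interpret prob_space "M n" by (rule prob)
  have "indep_vars (\<lambda>_. borel) (Ycomp n) {1..k n - 1}"
    by (rule indep_vars_subset[OF Ycomp_indep]) auto
  then show ?thesis by (rule indep_vars_cong[THEN iffD1, rotated 3]) (auto simp: Ycomp_def)
qed

lemma Fsum_measurable[measurable]: "Fsum n \<in> borel_measurable (M n)"
  unfolding Fsum_def by (rule borel_measurable_sum) (rule F_measurable)

lemma Astd_measurable[measurable]: "Astd n \<in> borel_measurable (M n)"
  unfolding Astd_def by measurable

lemma Zstat_measurable[measurable]: "Zstat n \<in> borel_measurable (M n)"
proof -
  have "(\<lambda>\<omega>. \<Sum>i = 1..k n - 1. Kfun \<rho> (1 + F n i \<omega> / Etail n \<omega>)) \<in> borel_measurable (M n)"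
    by (rule borel_measurable_sum) measurable
  then show ?thesis unfolding Zstat_def Let_def by measurable
qed

lemma Krem_mean_measurable[measurable]: "Krem_mean \<in> borel_measurable borel"
  unfolding Krem_mean_def[abs_def]
  by (rule sigma_finite_measure.borel_measurable_lebesgue_integral
        [OF prob_space_imp_sigma_finite[OF prob_space_Exp1]]) measurable

lemma Wrem_Etail_measurable: "(\<lambda>\<omega>. Wrem n (Etail n \<omega>) \<omega>) \<in> borel_measurable (M n)"
  unfolding Wrem_def
proof (rule borel_measurable_sum)
  fix i assume i: "i \<in> {1..k n - 1}"
  have "(\<lambda>\<omega>. (Etail n \<omega>, F n i \<omega>)) \<in> measurable (M n) (borel \<Otimes>\<^sub>M borel)"
    using i by measurable
  then have "(\<lambda>\<omega>. Krem \<rho> (Etail n \<omega>) (F n i \<omega>)) \<in> borel_measurable (M n)"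
    using measurable_compose[OF _ Krem_measurable_pair[of \<rho>]] by simp
  then show "(\<lambda>\<omega>. Krem \<rho> (Etail n \<omega>) (F n i \<omega>) - Krem_mean (Etail n \<omega>)) \<in> borel_measurable (M n)"
    by measurable
qed

lemma k_eventually_ge: "eventually (\<lambda>n. N \<le> k n) sequentially"
  using k_inf by (simp add: filterlim_at_top)

lemma Fsum_erlang:
  assumes "2 \<le> k n"
  shows "distributed (M n) lborel (Fsum n) (erlang_density (k n - 1 - 1) 1)"
proof -
  have "distributed (M n) lborel (\<lambda>x. \<Sum>i\<in>{1..k n - 1}. F n i x) (erlang_density (card {1..k n - 1} - 1) 1)"
    by (rule prob_space.exponential_distributed_sum[OF prob]) (use assms F_exp F_indep in auto)
  then show ?thesis by (simp add: Fsum_def[abs_def])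
qed

lemma Astd_cdf:
  assumes "2 \<le> k n"
  shows "measure (M n) {\<omega>\<in>space (M n). Astd n \<omega> \<le> y} = erlang_std_cdf (k n - 1) y"
proof -
  note D = Fsum_erlang[OF assms]
  have "measure (M n) {\<omega>\<in>space (M n). Astd n \<omega> \<le> y}
      = measure (M n) (Fsum n -` {s. (s - real (k n - 1)) / sqrt (real (k n - 1)) \<le> y} \<inter> space (M n))"
    by (intro arg_cong[where f="measure (M n)"]) (auto simp: Astd_def)
  also have "\<dots> = measure (distr (M n) lborel (Fsum n)) {s. (s - real (k n - 1)) / sqrt (real (k n - 1)) \<le> y}"
    by (subst measure_distr) auto
  also have "\<dots> = erlang_std_cdf (k n - 1) y"
    unfolding distributed_distr_eq_density[OF D] erlang_std_cdf_def by simp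
  finally show ?thesis .
qed

lemma Astd_tendsto_Phi: "(\<lambda>n. measure (M n) {\<omega>\<in>space (M n). Astd n \<omega> \<le> y}) \<longlonglongrightarrow> Phi y"
proof -
  have "filterlim (\<lambda>n. k n - 1) sequentially sequentially"
    unfolding filterlim_at_top
  proof
    fix N show "eventually (\<lambda>n. N \<le> k n - 1) sequentially"
      using k_eventually_ge[of "N + 1"] by eventually_elim auto
  qed
  then have "(\<lambda>n. erlang_std_cdf (k n - 1) y) \<longlonglongrightarrow> Phi y"
    by (rule filterlim_compose[OF erlang_std_cdf_tendsto_Phi])
  then show ?thesis
    by (rule Lim_transform_eventually)
       (use k_eventually_ge[of 2] in \<open>auto elim!: eventually_mono simp: Astd_cdf\<close>)
qed

text \<open>Chebyshev: \<open>A\<close> has unit variance, hence \<open>P(|A| \<ge> L) \<le> 1/L\<^sup>2\<close>.\<close>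
lemma Astd_tail_bound:
  assumes "2 \<le> k n" "0 < L"
  shows "measure (M n) {\<omega>\<in>space (M n). L \<le> \<bar>Astd n \<omega>\<bar>} \<le> 1 / L\<^sup>2"
proof -
  interpret prob_space "M n" by (rule prob)
  define m where "m = k n - 1"
  have m: "1 \<le> m" using assms by (simp add: m_def)
  have D: "distributed (M n) lborel (Fsum n) (erlang_density (m - 1) 1)"
    using Fsum_erlang[OF assms(1)] by (simp add: m_def)
  have mean: "expectation (Fsum n) = real m"
    using erlang_ith_moment[OF _ D, of 1] m by (simp add: fact_reduce)
  have var: "variance (Fsum n) = real m"
    using erlang_distributed_variance[OF _ D] m by simp
  have sq: "integrable (M n) (\<lambda>x. Fsum n x ^ 2)" using erlang_ith_moment_integrable[OF _ D, of 2] by simp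
  have sm: "0 < sqrt (real m)" using m by simp
  have "L \<le> \<bar>Astd n \<omega>\<bar> \<longleftrightarrow> L * sqrt (real m) \<le> \<bar>Fsum n \<omega> - expectation (Fsum n)\<bar>" for \<omega>
    unfolding Astd_def m_def[symmetric] abs_divide mean using sm by (simp add: pos_le_divide_eq)
  then have "measure (M n) {\<omega>\<in>space (M n). L \<le> \<bar>Astd n \<omega>\<bar>}
      = prob {\<omega>\<in>space (M n). L * sqrt (real m) \<le> \<bar>Fsum n \<omega> - expectation (Fsum n)\<bar>}"
    by simp
  also have "\<dots> \<le> variance (Fsum n) / (L * sqrt (real m))\<^sup>2"
    by (rule Chebyshev_inequality) (use sq assms sm in auto)
  also have "\<dots> = 1 / L\<^sup>2" unfolding var using m assms by (simp add: power_mult_distrib)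
  finally show ?thesis .
qed

text \<open>For a fixed level \<open>t \<ge> 1\<close>, the centred remainder sum has second moment at most
  \<open>(k - 1) 6 (1-\<rho>)\<^sup>2/t\<^sup>2\<close>; Chebyshev gives a tail bound.\<close>
lemma Wrem_tail_bound:
  assumes k: "2 \<le> k n" and t: "1 \<le> t" and D: "0 < D"
  shows "measure (M n) {\<omega>\<in>space (M n). D \<le> \<bar>Wrem n t \<omega>\<bar>} \<le> real (k n - 1) * (6 * (1 - \<rho>)\<^sup>2 / t\<^sup>2) / D\<^sup>2"
proof -
  interpret prob_space "M n" by (rule prob)
  define I where "I = {1..k n - 1}"
  define h where "h = (\<lambda>v. Krem \<rho> t v - Krem_mean t)"
  define Zi where "Zi i \<omega> = h (F n i \<omega>)" for i \<omega>
  have h_measurable[measurable]: "h \<in> borel_measurable borel" unfolding h_def by measurable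
  have t0: "0 < t" using t by simp
  note h_moments = centred_Krem_moments[OF rho t0, folded Krem_mean_def]
  have ind: "indep_vars (\<lambda>_. borel) Zi I"
    unfolding Zi_def[abs_def] I_def
    by (rule indep_vars_compose2[OF F_indep, where Y="\<lambda>i. h" and N="\<lambda>_. borel"]) simp
  have transfer: "integral\<^sup>L (M n) (\<lambda>\<omega>. g (Zi i \<omega>)) = integral\<^sup>L Exp1 (\<lambda>v. g (h v))"
      "integrable (M n) (\<lambda>\<omega>. g (Zi i \<omega>)) \<longleftrightarrow> integrable Exp1 (\<lambda>v. g (h v))"
    if "i \<in> I" "g \<in> borel_measurable borel" for i and g :: "real \<Rightarrow> real"
    using exponential_integral_transfer[OF F_exp, of i n "\<lambda>v. g (h v)"] that
    by (simp_all add: Zi_def I_def)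
  have sq: "integrable (M n) (\<lambda>\<omega>. (Zi i \<omega>)\<^sup>2)" and centred: "integral\<^sup>L (M n) (Zi i) = 0"
    and sq_mean: "integral\<^sup>L (M n) (\<lambda>\<omega>. (Zi i \<omega>)\<^sup>2) \<le> 6 * (1 - \<rho>)\<^sup>2 / t\<^sup>2" if i: "i \<in> I" for i
    using transfer[OF i, of "\<lambda>v. v\<^sup>2"] transfer[OF i, of "\<lambda>v. v"] h_moments by (simp_all add: h_def)
  define f where "f \<omega> = (\<Sum>i\<in>I. Zi i \<omega>)" for \<omega>
  note second = indep_centred_sum_second_moment[OF prob _ ind sq centred, folded f_def]
  have f_rv[measurable]: "random_variable borel f"
    unfolding f_def using ind unfolding indep_vars_def by (intro borel_measurable_sum) blast
  have mean_f: "expectation f = 0"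
    unfolding f_def using ind sq centred unfolding indep_vars_def
    by (simp add: Bochner_Integration.integral_sum square_integrable_imp_integrable)
  have "measure (M n) {\<omega>\<in>space (M n). D \<le> \<bar>Wrem n t \<omega>\<bar>} = prob {\<omega>\<in>space (M n). D \<le> \<bar>f \<omega> - expectation f\<bar>}"
    by (simp add: mean_f f_def Zi_def h_def Wrem_def I_def)
  also have "\<dots> \<le> variance f / D\<^sup>2"
    by (rule Chebyshev_inequality) (use D second in \<open>auto simp: I_def\<close>)
  also have "variance f = (\<Sum>i\<in>I. expectation (\<lambda>\<omega>. (Zi i \<omega>)\<^sup>2))"
    using second by (simp add: mean_f I_def)
  also have "\<dots> \<le> real (k n - 1) * (6 * (1 - \<rho>)\<^sup>2 / t\<^sup>2)"
    using sum_mono[of I _ "\<lambda>_. 6 * (1 - \<rho>)\<^sup>2 / t\<^sup>2", OF sq_mean] by (simp add: I_def)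
  finally show ?thesis by (simp add: divide_right_mono)
qed

text \<open>The same bound holds at the random level \<open>t = E\<close> on the event \<open>E > C\<close>, because \<open>E\<close> is
  independent of the \<open>F\<^sub>i\<close>: condition on \<open>E\<close> and bound every section.\<close>
lemma Wrem_Etail_tail_bound:
  assumes k: "2 \<le> k n" and C: "1 \<le> C" and D: "0 < D"
  shows "measure (M n) {\<omega>\<in>space (M n). C < Etail n \<omega> \<and> D \<le> \<bar>Wrem n (Etail n \<omega>) \<omega>\<bar>}
    \<le> real (k n - 1) * (6 * (1 - \<rho>)\<^sup>2 / C\<^sup>2) / D\<^sup>2"
proof -
  interpret prob_space "M n" by (rule prob)
  define I where "I = {1..k n - 1}"
  define S where "S = PiM {0::nat} (\<lambda>_. borel :: real measure)"
  define N where "N = PiM I (\<lambda>_. borel :: real measure)"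
  define first where "first \<omega> = restrict (\<lambda>i. Ycomp n i \<omega>) {0}" for \<omega>
  define rest where "rest \<omega> = restrict (\<lambda>i. Ycomp n i \<omega>) I" for \<omega>
  define B where "B = real (k n - 1) * (6 * (1 - \<rho>)\<^sup>2 / C\<^sup>2) / D\<^sup>2"
  define P where "P = {p \<in> space (S \<Otimes>\<^sub>M N). C < fst p 0 \<and>
      D \<le> \<bar>\<Sum>i\<in>I. (Krem \<rho> (fst p 0) (snd p i) - Krem_mean (fst p 0))\<bar>}"
  have ind: "indep_var S first N rest"
    unfolding S_def N_def first_def rest_def I_def
    by (rule indep_var_restrict[OF Ycomp_indep]) auto
  have P_sets: "P \<in> sets (S \<Otimes>\<^sub>M N)"
    unfolding P_def S_def N_def by measurable
  have sections: "measure (M n) {\<omega>\<in>space (M n). (x, rest \<omega>) \<in> P} \<le> B" if x: "x \<in> space S" for x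
  proof (cases "C < x 0")
    case True
    have "(x, rest \<omega>) \<in> space (S \<Otimes>\<^sub>M N)" for \<omega>
      using x by (auto simp: space_pair_measure N_def rest_def space_PiM)
    then have "{\<omega>\<in>space (M n). (x, rest \<omega>) \<in> P} = {\<omega>\<in>space (M n). D \<le> \<bar>Wrem n (x 0) \<omega>\<bar>}"
      using True by (auto simp: P_def Wrem_def rest_def Ycomp_def I_def)
    also have "measure (M n) \<dots> \<le> real (k n - 1) * (6 * (1 - \<rho>)\<^sup>2 / (x 0)\<^sup>2) / D\<^sup>2"
      by (rule Wrem_tail_bound[OF k _ D]) (use True C in auto)
    also have "\<dots> \<le> B" unfolding B_def
    proof (intro divide_right_mono mult_left_mono divide_left_mono)
      show "C\<^sup>2 \<le> (x 0)\<^sup>2" using True C by (intro power_mono) auto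
    qed (use True C in auto)
    finally show ?thesis .
  next
    case False
    then have empty: "{\<omega>\<in>space (M n). (x, rest \<omega>) \<in> P} = {}" by (auto simp: P_def)
    show ?thesis unfolding empty by (simp add: B_def)
  qed
  have "{\<omega>\<in>space (M n). C < Etail n \<omega> \<and> D \<le> \<bar>Wrem n (Etail n \<omega>) \<omega>\<bar>}
      = {\<omega>\<in>space (M n). (first \<omega>, rest \<omega>) \<in> P}"
    by (auto simp: P_def Wrem_def first_def rest_def Ycomp_def I_def space_pair_measure S_def N_def space_PiM)
  also have "measure (M n) \<dots> \<le> B"
    by (rule indep_section_measure_bound[OF prob ind P_sets _ sections]) (simp add: B_def)
  finally show ?thesis by (simp add: B_def)
qed

lemma Etail_small: "0 \<le> C \<Longrightarrow> (\<lambda>n. measure (M n) {\<omega> \<in> space (M n). Etail n \<omega> \<le> C}) \<longlonglongrightarrow> 0"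
  unfolding Etail_def by (rule order_stat_tendsto_infinity[OF k_inf k_n prob X_exp X_indep])

lemma large_deviation_forces_Wrem:
  assumes k: "2 \<le> k n" and C1: "1 \<le> C" and C2: "30 * (1 - \<rho>)\<^sup>2 \<le> C" and L: "0 < L"
    and CL: "30 * (1 - \<rho>)\<^sup>2 * L / C \<le> \<delta> / 6"
    and kL: "2 * L / real (k n) \<le> \<delta> / 6" and k\<delta>: "2 / sqrt (real (k n)) \<le> \<delta> / 6"
    and E: "C < Etail n \<omega>" and A: "\<bar>Astd n \<omega>\<bar> < L" and dev: "\<delta> < \<bar>Zstat n \<omega> - Astd n \<omega>\<bar>"
  shows "\<delta> * sqrt (real (k n)) / 4 \<le> \<bar>Wrem n (Etail n \<omega>) \<omega>\<bar>"
proof -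
  define t where "t = Etail n \<omega>"
  define c where "c = 1 - \<rho>"
  have t: "C < t" using E by (simp add: t_def)
  have card: "card {1..k n - 1} + 1 = k n" "1 \<le> card {1..k n - 1}" using k by auto
  have det: "\<bar>Zstat n \<omega> - Astd n \<omega>\<bar> \<le> \<bar>Astd n \<omega>\<bar> * (2 / real (k n) + 30 * c\<^sup>2 / t)
        + 2 * \<bar>Wrem n t \<omega>\<bar> / sqrt (real (k n)) + 2 / sqrt (real (k n))"
    using statistic_vs_standardised_sum[OF rho _ _ card, of t "\<lambda>i. F n i \<omega>"] t C1 C2
    unfolding Zstat_def Let_def Astd_def Fsum_def Wrem_def Krem_mean_def t_def c_def by simp
  have "30 * c\<^sup>2 / t \<le> 30 * c\<^sup>2 / C" using t C1 by (intro divide_left_mono) auto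
  then have "\<bar>Astd n \<omega>\<bar> * (2 / real (k n) + 30 * c\<^sup>2 / t) \<le> L * (2 / real (k n) + 30 * c\<^sup>2 / C)"
    using A t C1 by (intro mult_mono) auto
  also have "\<dots> = 2 * L / real (k n) + 30 * c\<^sup>2 * L / C" by (simp add: field_simps)
  also have "\<dots> \<le> \<delta> / 3" using kL CL by (simp add: c_def)
  finally have "\<delta> / 2 < 2 * \<bar>Wrem n t \<omega>\<bar> / sqrt (real (k n))" using det k\<delta> dev by linarith
  then show ?thesis using k by (simp add: t_def field_simps)
qed

lemma deviation_event_bound:
  assumes k: "2 \<le> k n" and C1: "1 \<le> C" and C2: "30 * (1 - \<rho>)\<^sup>2 \<le> C" and L: "0 < L"
    and CL: "30 * (1 - \<rho>)\<^sup>2 * L / C \<le> \<delta> / 6"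
    and kL: "2 * L / real (k n) \<le> \<delta> / 6" and k\<delta>: "2 / sqrt (real (k n)) \<le> \<delta> / 6"
  shows "measure (M n) {\<omega>\<in>space (M n). \<delta> < \<bar>Zstat n \<omega> - Astd n \<omega>\<bar>}
    \<le> measure (M n) {\<omega>\<in>space (M n). Etail n \<omega> \<le> C} + measure (M n) {\<omega>\<in>space (M n). L \<le> \<bar>Astd n \<omega>\<bar>}
      + measure (M n) {\<omega>\<in>space (M n). C < Etail n \<omega> \<and> \<delta> * sqrt (real (k n)) / 4 \<le> \<bar>Wrem n (Etail n \<omega>) \<omega>\<bar>}"
    (is "_ \<le> measure _ ?small_E + measure _ ?large_A + measure _ ?large_W")
proof -
  interpret prob_space "M n" by (rule prob)
  note Wrem_Etail_measurable[measurable]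
  have "{\<omega>\<in>space (M n). \<delta> < \<bar>Zstat n \<omega> - Astd n \<omega>\<bar>} \<subseteq> (?small_E \<union> ?large_A) \<union> ?large_W"
    using large_deviation_forces_Wrem[OF assms] by (auto simp: not_le not_less)
  then have "measure (M n) {\<omega>\<in>space (M n). \<delta> < \<bar>Zstat n \<omega> - Astd n \<omega>\<bar>}
      \<le> measure (M n) ((?small_E \<union> ?large_A) \<union> ?large_W)"
    by (rule finite_measure_mono) measurable
  also have "\<dots> \<le> measure (M n) (?small_E \<union> ?large_A) + measure (M n) ?large_W"
    by (rule measure_subadditive) measurable
  also have "measure (M n) (?small_E \<union> ?large_A) \<le> measure (M n) ?small_E + measure (M n) ?large_A"
    by (rule measure_subadditive) measurable
  finally show ?thesis by simp
qed

lemma Wrem_Etail_deviation_bound: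
  assumes k: "2 \<le> k n" and C: "1 \<le> C" and \<delta>: "0 < \<delta>"
  shows "measure (M n) {\<omega>\<in>space (M n). C < Etail n \<omega> \<and> \<delta> * sqrt (real (k n)) / 4 \<le> \<bar>Wrem n (Etail n \<omega>) \<omega>\<bar>}
    \<le> 96 * (1 - \<rho>)\<^sup>2 / (C\<^sup>2 * \<delta>\<^sup>2)"
proof -
  define D where "D = \<delta> * sqrt (real (k n)) / 4"
  have kpos: "0 < real (k n)" using k by simp
  then have D: "0 < D" using \<delta> by (simp add: D_def)
  have "measure (M n) {\<omega>\<in>space (M n). C < Etail n \<omega> \<and> D \<le> \<bar>Wrem n (Etail n \<omega>) \<omega>\<bar>}
      \<le> real (k n - 1) * (6 * (1 - \<rho>)\<^sup>2 / C\<^sup>2) / D\<^sup>2"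
    by (rule Wrem_Etail_tail_bound[OF k C D])
  also have "\<dots> = 96 * (1 - \<rho>)\<^sup>2 / (C\<^sup>2 * \<delta>\<^sup>2) * (real (k n - 1) / real (k n))"
    using kpos \<delta> C by (simp add: D_def power_mult_distrib power_divide field_simps)
  also have "\<dots> \<le> 96 * (1 - \<rho>)\<^sup>2 / (C\<^sup>2 * \<delta>\<^sup>2)" using kpos by (intro mult_left_le) auto
  finally show ?thesis unfolding D_def .
qed

text \<open>\<open>Z - A \<rightarrow> 0\<close> in probability: choose \<open>L\<close> with \<open>1/L\<^sup>2 = \<epsilon>/3\<close>, then \<open>C\<close> large, then \<open>n\<close> large.\<close>
lemma Zstat_close_to_Astd:
  assumes \<delta>: "0 < \<delta>"
  shows "(\<lambda>n. measure (M n) {\<omega>\<in>space (M n). \<delta> < \<bar>Zstat n \<omega> - Astd n \<omega>\<bar>}) \<longlonglongrightarrow> 0"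
proof (rule order_tendstoI)
  fix a :: real assume "a < 0"
  then show "eventually (\<lambda>n. a < measure (M n) {\<omega>\<in>space (M n). \<delta> < \<bar>Zstat n \<omega> - Astd n \<omega>\<bar>}) sequentially"
    by (intro always_eventually allI) (smt (verit) measure_nonneg)
next
  fix e :: real assume e: "0 < e"
  define c where "c = 1 - \<rho>"
  define L where "L = sqrt (3 / e)"
  have L: "0 < L" "1 / L\<^sup>2 = e / 3" using e by (auto simp: L_def)
  define C where "C = max 1 (max (30 * c\<^sup>2) (max (180 * c\<^sup>2 * L / \<delta>) (288 * c\<^sup>2 / (\<delta>\<^sup>2 * e))))"
  have C: "1 \<le> C" "30 * c\<^sup>2 \<le> C" "180 * c\<^sup>2 * L / \<delta> \<le> C" "288 * c\<^sup>2 / (\<delta>\<^sup>2 * e) \<le> C"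
    by (auto simp: C_def)
  have C0: "0 < C" using C by simp
  have CL: "30 * c\<^sup>2 * L / C \<le> \<delta> / 6" using C(3) C0 \<delta> by (simp add: field_simps)
  have "96 * c\<^sup>2 / (C\<^sup>2 * \<delta>\<^sup>2) \<le> 96 * c\<^sup>2 / (C * \<delta>\<^sup>2)"
    using C(1) \<delta> by (intro divide_left_mono mult_right_mono) (auto simp: power2_eq_square)
  also have "\<dots> \<le> e / 3" using C(4) C0 \<delta> e by (simp add: field_simps)
  finally have CW: "96 * c\<^sup>2 / (C\<^sup>2 * \<delta>\<^sup>2) \<le> e / 3" .
  define K where "K = nat \<lceil>12 * L / \<delta> + 144 / \<delta>\<^sup>2\<rceil> + 2"
  have "eventually (\<lambda>n. measure (M n) {\<omega> \<in> space (M n). Etail n \<omega> \<le> C} < e / 3) sequentially"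
    using Etail_small[of C] C0 e by (intro order_tendstoD) auto
  with k_eventually_ge[of K]
  show "eventually (\<lambda>n. measure (M n) {\<omega>\<in>space (M n). \<delta> < \<bar>Zstat n \<omega> - Astd n \<omega>\<bar>} < e) sequentially"
  proof eventually_elim
    case (elim n)
    have kK: "12 * L / \<delta> + 144 / \<delta>\<^sup>2 \<le> real (k n)" "2 \<le> k n"
      using elim(1) unfolding K_def by linarith+
    note large_k = large_k_bounds[OF kK(1) L(1) \<delta>]
    have "measure (M n) {\<omega>\<in>space (M n). C < Etail n \<omega> \<and> \<delta> * sqrt (real (k n)) / 4 \<le> \<bar>Wrem n (Etail n \<omega>) \<omega>\<bar>}
        \<le> e / 3"
      using Wrem_Etail_deviation_bound[OF kK(2) C(1) \<delta>] CW unfolding c_def by linarith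
    moreover have "measure (M n) {\<omega>\<in>space (M n). L \<le> \<bar>Astd n \<omega>\<bar>} \<le> e / 3"
      using Astd_tail_bound[OF kK(2) L(1)] L(2) by simp
    moreover note deviation_event_bound[OF kK(2) C(1) C(2)[unfolded c_def] L(1) CL[unfolded c_def] large_k]
    ultimately show ?case using elim(2) by linarith
  qed
qed

theorem Zstat_weak_conv:
  "weak_conv_m (\<lambda>n. distr (M n) borel (Zstat n)) std_normal_distribution"
proof -
  have cdf_Z: "cdf (distr (M n) borel (Zstat n)) x = measure (M n) {\<omega>\<in>space (M n). Zstat n \<omega> \<le> x}" for n x
    unfolding cdf_def by (subst measure_distr) (auto intro!: arg_cong[where f="measure (M n)"])
  have "(\<lambda>n. measure (M n) {\<omega>\<in>space (M n). Zstat n \<omega> \<le> x}) \<longlonglongrightarrow> Phi x" for x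
    by (rule slutsky_Phi[OF prob Astd_measurable Zstat_measurable Astd_tendsto_Phi Zstat_close_to_Astd])
  then show ?thesis unfolding weak_conv_m_def weak_conv_def cdf_Z Phi_def by blast
qed

end

theorem lemma6:
  fixes M :: "nat \<Rightarrow> 'a measure"
    and k :: "nat \<Rightarrow> nat"
    and X F :: "nat \<Rightarrow> nat \<Rightarrow> 'a \<Rightarrow> real"
    and \<rho> :: real
  assumes k_inf: "filterlim k at_top sequentially"
    and k_n: "(\<lambda>n. real (k n) / real n) \<longlonglongrightarrow> 0"
    and prob: "\<And>n. prob_space (M n)"
    and X_exp: "\<And>n i. i < n \<Longrightarrow> distributed (M n) lborel (X n i) (exponential_density 1)"
    and X_indep: "\<And>n. prob_space.indep_vars (M n) (\<lambda>_. borel) (X n) {..<n}"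
    and F_exp: "\<And>n j. j \<in> {1..k n - 1} \<Longrightarrow> distributed (M n) lborel (F n j) (exponential_density 1)"
    and EF_indep: "\<And>n. prob_space.indep_vars (M n) (\<lambda>_. borel)
          (\<lambda>i \<omega>. if i = 0 then order_stat n (\<lambda>j. X n j \<omega>) (n - k n + 1) else F n i \<omega>)
          {0..k n - 1}"
    and rho: "\<rho> \<le> 0"
  shows "weak_conv_m
     (\<lambda>n. distr (M n) borel
        (\<lambda>\<omega>. let E = order_stat n (\<lambda>j. X n j \<omega>) (n - k n + 1);
               U = (1 / real (k n)) * (\<Sum>i = 1..k n - 1. Kfun \<rho> (1 + F n i \<omega> / E))
           in sqrt (real (k n)) / sigma_fun \<rho> E * (U - mu_fun \<rho> E)))
     std_normal_distribution"
proof -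
  interpret tail_statistic M k X F \<rho>
    by (rule tail_statistic.intro[OF assms])
  show ?thesis
    using Zstat_weak_conv unfolding Zstat_def[abs_def] Etail_def[abs_def] .
qed

end
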